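(* For $\mathbf k,\mathbf j\in\Lambda$, $$\langle\mathsf{TC}_{\mathbf k},\mathsf{TC}_{\mathbf j}\rangle_{\triangle_H}=\frac{\delta_{\mathbf k,\mathbf j}}{|\mathbf k\mathcal G|},$$ where $|\mathbf k\mathcal G|$ is the number of distinct vectors obtained by permuting the coordinates of $\mathbf k$ (so it equals $1$ for $\mathbf k=0$, $4$ for $\mathbf k$ of the form $(k,k,k,-3k)$ or $(3k,-k,-k,-k)$ with $k>0$, $6$ for $(2k,2k,-2k,-2k)$ with $k>0$, $12$ if exactly two coordinates of $\mathbf k$ coincide, and $24$ if all coordinates are distinct). For $\mathbf k,\mathbf j\in\Lambda^\circ$, $$\langle\mathsf{TS}_{\mathbf k},\mathsf{TS}_{\mathbf j}\rangle_{\triangle_H}=\tfrac1{24}\delta_{\mathbf k,\mathbf j}.$$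
   Context: Let $\mathbb R^4_H=\{\mathbf t\in\mathbb R^4: t_1+t_2+t_3+t_4=0\}$ with 3-dimensional Lebesgue measure $d\mathbf t$, $\mathbb Z^4_H=\mathbb Z^4\cap\mathbb R^4_H$, $\mathbb H=\{\mathbf k\in\mathbb Z^4_H: k_1\equiv k_2\equiv k_3\equiv k_4\pmod4\}$, $\phi_{\mathbf k}(\mathbf t)=e^{\frac{\pi i}{2}\mathbf k\cdot\mathbf t}$. Let $\mathcal G=S_4$ act on vectors by permuting coordinates, $\mathbf t\mapsto\mathbf t\sigma$, with sign $\operatorname{sgn}\sigma$. $\mathsf{TC}_{\mathbf k}(\mathbf t)=\frac1{24}\sum_{\sigma\in\mathcal G}\phi_{\mathbf k}(\mathbf t\sigma)$, $\mathsf{TS}_{\mathbf k}(\mathbf t)=-\frac1{24}\sum_{\sigma\in\mathcal G}\operatorname{sgn}(\sigma)\phi_{\mathbf k}(\mathbf t\sigma)$. $\Lambda=\{\mathbf k\in\mathbb H: k_1\ge k_2\ge k_3\ge k_4\}$, $\Lambda^\circ=\{\mathbf k\in\mathbb H: k_1>k_2>k_3>k_4\}$. $\triangle_H=\{\mathbf t\in\mathbb R^4_H: t_1-t_2,\,t_2-t_3,\,t_3-t_4,\,t_1-t_4\in[0,1]\}$ and $\langle f,g\rangle_{\triangle_H}=\frac1{|\triangle_H|}\int_{\triangle_H}f\bar g\,d\mathbf t$. *)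

theory Defs
  imports "HOL-Analysis.Analysis"
begin

definition G4 :: "(4 \<Rightarrow> 4) set" where
  "G4 = {\<sigma>. \<sigma> permutes (UNIV :: 4 set)}"

definition pvec :: "'a^4 \<Rightarrow> (4 \<Rightarrow> 4) \<Rightarrow> 'a^4" where
  "pvec t \<sigma> = (\<chi> i. t $ \<sigma> i)"

definition Z4H :: "(int^4) set" where
  "Z4H = {k. (\<Sum>i\<in>UNIV. k $ i) = 0}"

definition HH :: "(int^4) set" where
  "HH = {k \<in> Z4H. \<forall>i j. k $ i mod 4 = k $ j mod 4}"

definition Lam :: "(int^4) set" where
  "Lam = {k \<in> HH. k $ 1 \<ge> k $ 2 \<and> k $ 2 \<ge> k $ 3 \<and> k $ 3 \<ge> k $ 4}"

definition Lam_int :: "(int^4) set" where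
  "Lam_int = {k \<in> HH. k $ 1 > k $ 2 \<and> k $ 2 > k $ 3 \<and> k $ 3 > k $ 4}"

definition phi :: "int^4 \<Rightarrow> real^4 \<Rightarrow> complex" where
  "phi k t = exp (complex_of_real (pi / 2) * \<i> *
                  complex_of_real (\<Sum>i\<in>UNIV. real_of_int (k $ i) * t $ i))"

definition TC :: "int^4 \<Rightarrow> real^4 \<Rightarrow> complex" where
  "TC k t = (1/24) * (\<Sum>\<sigma>\<in>G4. phi k (pvec t \<sigma>))"

definition TS :: "int^4 \<Rightarrow> real^4 \<Rightarrow> complex" where
  "TS k t = - (1/24) * (\<Sum>\<sigma>\<in>G4. of_int (sign \<sigma>) * phi k (pvec t \<sigma>))"

text \<open>The hyperplane R^4_H is parametrised by its first three coordinates,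
  t = (t1, t2, t3, -(t1+t2+t3)).  This pushes 3-dimensional Lebesgue measure on R^3
  to a constant multiple of 3-dimensional Lebesgue (surface) measure on R^4_H; the
  constant cancels in the normalised inner product below.\<close>

definition embH :: "real^3 \<Rightarrow> real^4" where
  "embH x = (\<chi> i. if i = 1 then x $ 1 else if i = 2 then x $ 2 else if i = 3 then x $ 3
                   else - (x $ 1 + x $ 2 + x $ 3))"

definition triH :: "(real^4) set" where
  "triH = {t. (\<Sum>i\<in>UNIV. t $ i) = 0 \<and>
              t $ 1 - t $ 2 \<in> {0..1} \<and> t $ 2 - t $ 3 \<in> {0..1} \<and>
              t $ 3 - t $ 4 \<in> {0..1} \<and> t $ 1 - t $ 4 \<in> {0..1}}"

definition triH_param :: "(real^3) set" where
  "triH_param = embH -` triH"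

definition ipH :: "(real^4 \<Rightarrow> complex) \<Rightarrow> (real^4 \<Rightarrow> complex) \<Rightarrow> complex" where
  "ipH f g = integral triH_param (\<lambda>x. f (embH x) * cnj (g (embH x)))
             / complex_of_real (measure lebesgue triH_param)"

definition orbit_card :: "int^4 \<Rightarrow> nat" where
  "orbit_card k = card (pvec k ` G4)"

end

theory Submission
  imports Defs
begin

text \<open>In the coordinates \<open>(t\<^sub>1, t\<^sub>2, t\<^sub>3)\<close> of the hyperplane, the lattice \<open>\<int>\<^sup>4\<^sub>H\<close> becomes
  \<open>\<int>\<^sup>3\<close>, the action of \<open>S\<^sub>4\<close> becomes a family of unimodular linear maps, and the alcove
  becomes \<open>triH_param\<close>. Up to a null set, the unit cube is tiled by the integer translates of the
  24 images of the alcove: a point with no integral coordinate and no integral coordinate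
  difference is moved into exactly one of them by lowering the \<open>r = -\<lfloor>t\<^sub>4\<rfloor>\<close> largest fractional
  parts of its coordinates by \<open>1\<close>. Hence for a continuous function that is \<open>\<int>\<^sup>4\<^sub>H\<close>-periodic and
  \<open>S\<^sub>4\<close>-invariant, the normalised integral over the alcove is its integral over the cube.

  The products \<open>TC k \<cdot> cnj (TC j)\<close> and \<open>TS k \<cdot> cnj (TS j)\<close> are such functions and expand into
  characters \<open>phi (k\<sigma> - j\<tau>)\<close> whose frequencies lie in \<open>HH\<close>. Over the cube \<open>phi c\<close> integrates to
  \<open>1\<close> or \<open>0\<close> according as \<open>c = 0\<close> or not, because for \<open>c \<noteq> 0\<close> some translation inside the cube
  multiplies it by \<open>-1\<close>. It remains to count the pairs \<open>(\<sigma>, \<tau>)\<close> with \<open>k\<sigma> = j\<tau>\<close>: for sorted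
  \<open>k, j\<close> this forces \<open>k = j\<close>, and then there are \<open>24 \<cdot> |Stab k| = 24\<^sup>2 / orbit_card k\<close> of them; for
  strictly sorted \<open>k\<close> only \<open>\<sigma> = \<tau>\<close> remains, with weight \<open>sign \<sigma> \<cdot> sign \<tau> = 1\<close>.\<close>

section \<open>Coordinates on the hyperplane\<close>

definition proj3 :: "real^4 \<Rightarrow> real^3" where
  "proj3 t = vector [t $ 1, t $ 2, t $ 3]"

lemma embH_nth [simp]:
  "embH x $ 1 = x $ 1" "embH x $ 2 = x $ 2" "embH x $ 3 = x $ 3"
  "embH x $ 4 = - (x $ 1 + x $ 2 + x $ 3)"
  by (simp_all add: embH_def)

lemma proj3_nth [simp]: "proj3 t $ 1 = t $ 1" "proj3 t $ 2 = t $ 2" "proj3 t $ 3 = t $ 3"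
  by (simp_all add: proj3_def)

lemma sum_embH: "(\<Sum>i\<in>UNIV. embH x $ i) = 0"
  by (simp add: sum_4)

lemma proj3_embH [simp]: "proj3 (embH x) = x"
  by (simp add: vec_eq_iff forall_3)

lemma embH_proj3: "(\<Sum>i\<in>UNIV. t $ i) = 0 \<Longrightarrow> embH (proj3 t) = t"
  by (simp add: vec_eq_iff forall_4 sum_4)

lemma linear_embH: "linear embH"
  by (rule linearI) (simp_all add: vec_eq_iff forall_4 algebra_simps)

lemmas embH_add = linear_add[OF linear_embH]
lemmas embH_diff = linear_diff[OF linear_embH]

lemma continuous_on_embH_nth: "continuous_on UNIV (\<lambda>x. embH x $ m)"
  by (intro continuous_on_component linear_continuous_on)
     (simp add: linear_conv_bounded_linear[symmetric] linear_embH)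

lemma pvec_nth [simp]: "pvec t \<sigma> $ i = t $ \<sigma> i"
  by (simp add: pvec_def)

lemma pvec_pvec: "pvec (pvec t \<sigma>) \<tau> = pvec t (\<sigma> \<circ> \<tau>)"
  by (simp add: vec_eq_iff)

lemma pvec_id [simp]: "pvec t id = t"
  by (simp add: vec_eq_iff)

lemma pvec_inv: "\<sigma> permutes UNIV \<Longrightarrow> pvec (pvec t \<sigma>) (inv \<sigma>) = t"
  by (simp add: pvec_pvec permutes_inv_o(1))

lemma sum_permute_nth: "\<sigma> permutes UNIV \<Longrightarrow> (\<Sum>i\<in>UNIV. t $ \<sigma> i) = (\<Sum>i\<in>UNIV. t $ i)"
  using sum.permute[of \<sigma> UNIV "\<lambda>i. t $ i"] by (simp add: o_def)

lemma mem_G4 [simp]: "\<sigma> \<in> G4 \<longleftrightarrow> \<sigma> permutes UNIV"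
  by (simp add: G4_def)

lemma finite_G4: "finite G4"
  unfolding G4_def by (rule finite_permutations) simp

lemma card_G4: "card G4 = 24"
  unfolding G4_def by (simp add: card_permutations numeral_eq_Suc)

definition permH :: "(4 \<Rightarrow> 4) \<Rightarrow> real^3 \<Rightarrow> real^3" where
  "permH \<sigma> x = proj3 (pvec (embH x) \<sigma>)"

lemma embH_permH: "\<sigma> permutes UNIV \<Longrightarrow> embH (permH \<sigma> x) = pvec (embH x) \<sigma>"
  unfolding permH_def by (rule embH_proj3) (simp add: sum_permute_nth sum_embH)

lemma permH_permH: "\<sigma> permutes UNIV \<Longrightarrow> permH \<tau> (permH \<sigma> x) = permH (\<sigma> \<circ> \<tau>) x"
  by (simp add: permH_def[of \<tau>] embH_permH pvec_pvec) (simp add: permH_def)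

lemma permH_id: "permH id x = x"
  by (simp add: permH_def)

lemma permH_inv: "\<sigma> permutes UNIV \<Longrightarrow> permH (inv \<sigma>) (permH \<sigma> x) = x"
  by (simp add: permH_permH permutes_inv_o(1) permH_id)

lemma permH_inv': "\<sigma> permutes UNIV \<Longrightarrow> permH \<sigma> (permH (inv \<sigma>) x) = x"
  by (simp add: permH_permH permutes_inv permutes_inv_o(2) permH_id)

lemma linear_permH: "linear (permH \<sigma>)"
  by (rule linearI) (simp_all add: permH_def vec_eq_iff forall_3 embH_add linear_cmul[OF linear_embH])

lemma permH_nth_ex: "\<exists>m. permH \<sigma> x $ i = embH x $ m"
  using exhaust_3[of i] by (auto simp: permH_def)

definition int_vecs :: "(real^'n) set" where
  "int_vecs = {p. \<forall>i. p $ i \<in> \<int>}"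

lemma embH_Ints: "p \<in> int_vecs \<Longrightarrow> embH p $ m \<in> \<int>"
  using exhaust_4[of m] by (auto simp: int_vecs_def)

lemma permH_int_vecs: assumes "p \<in> int_vecs" shows "permH \<sigma> p \<in> int_vecs"
proof -
  have "permH \<sigma> p $ i \<in> \<int>" for i
    using permH_nth_ex[of \<sigma> p i] embH_Ints[OF assms] by metis
  then show ?thesis by (simp add: int_vecs_def)
qed

lemma det_Ints: "(\<And>i j. A $ i $ j \<in> \<int>) \<Longrightarrow> det (A::real^'n^'n) \<in> \<int>"
  unfolding det_def by (intro Ints_sum Ints_mult Ints_prod) auto

text \<open>The determinants of \<open>permH \<sigma>\<close> and of its inverse are integers with product \<open>1\<close>.\<close>

lemma abs_det_permH: assumes "\<sigma> permutes UNIV" shows "\<bar>det (matrix (permH \<sigma>))\<bar> = 1"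
proof -
  have "axis j 1 \<in> int_vecs" for j :: 3
    by (auto simp: int_vecs_def axis_def)
  then have int_det: "det (matrix (permH \<rho>)) \<in> \<int>" for \<rho>
    by (intro det_Ints) (use permH_int_vecs in \<open>simp add: matrix_def int_vecs_def\<close>)
  have "permH \<sigma> \<circ> permH (inv \<sigma>) = id"
    using permH_inv'[OF assms] by (auto simp: fun_eq_iff)
  then have inverse: "matrix (permH \<sigma>) ** matrix (permH (inv \<sigma>)) = mat 1"
    using matrix_compose[OF linear_permH linear_permH, of \<sigma> "inv \<sigma>"] by (simp add: matrix_id_mat_1)
  obtain a where a: "det (matrix (permH \<sigma>)) = of_int a"
    using int_det Ints_cases by metis
  obtain b where b: "det (matrix (permH (inv \<sigma>))) = of_int b"
    using int_det Ints_cases by metis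
  have "of_int (a * b) = (1::real)"
    using arg_cong[OF inverse, of det] by (simp add: det_mul a b)
  then have "a * b = 1"
    by (simp only: of_int_eq_1_iff)
  then have "\<bar>a\<bar> = 1"
    using zmult_eq_1_iff by auto
  then show ?thesis using a by simp
qed

text \<open>The library's change of variables needs values in some \<open>real^'m\<close>; complex values are
  transported through the isometry \<open>\<complex> \<cong> \<real>\<^sup>2\<close>.\<close>

definition vec_of_complex :: "complex \<Rightarrow> real^2" where
  "vec_of_complex z = vector [Re z, Im z]"

definition complex_of_vec :: "real^2 \<Rightarrow> complex" where
  "complex_of_vec v = Complex (v $ 1) (v $ 2)"

lemma bounded_linear_vec_of_complex: "bounded_linear vec_of_complex"
proof -
  have "linear vec_of_complex"
    by (rule linearI) (simp_all add: vec_of_complex_def vec_eq_iff forall_2)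
  then show ?thesis by (simp add: linear_conv_bounded_linear)
qed

lemma bounded_linear_complex_of_vec: "bounded_linear complex_of_vec"
proof -
  have "linear complex_of_vec"
    by (rule linearI) (simp_all add: complex_of_vec_def complex_eq_iff)
  then show ?thesis by (simp add: linear_conv_bounded_linear)
qed

lemma complex_of_vec_of_complex [simp]: "complex_of_vec (vec_of_complex z) = z"
  by (simp add: vec_of_complex_def complex_of_vec_def complex_eq_iff)

lemma bij_linear_plus_const:
  fixes L :: "real^'n \<Rightarrow> real^'n"
  assumes L: "linear L" and det: "det (matrix L) \<noteq> 0"
  shows "bij (\<lambda>x. L x + c)"
proof -
  have "inj L" using det det_nz_iff_inj[OF L] by simp
  moreover have "surj L" using L \<open>inj L\<close> linear_inj_imp_surj by blast
  ultimately show ?thesis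
    by (intro bij_betw_byWitness[where f' = "\<lambda>y. inv L (y - c)"])
       (auto simp: surj_f_inv_f inv_f_f)
qed

lemma integral_unimodular_affine:
  fixes f :: "real^'n::{finite,wellorder} \<Rightarrow> complex"
  assumes L: "linear L" and det: "\<bar>det (matrix L)\<bar> = 1"
    and f: "f absolutely_integrable_on UNIV"
  shows "integral UNIV (\<lambda>x. f (L x + c)) = integral UNIV f"
proof -
  define g where "g x = L x + c" for x
  define h where "h = vec_of_complex \<circ> f"
  have h: "h absolutely_integrable_on UNIV"
    unfolding h_def by (rule absolutely_integrable_linear[OF f bounded_linear_vec_of_complex])
  have der: "(g has_derivative L) (at x within UNIV)" for x
    unfolding g_def by (rule has_derivative_add_const[OF linear_imp_has_derivative[OF L]])
  have "bij g"
    unfolding g_def[abs_def] by (rule bij_linear_plus_const) (use L det in auto)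
  then have inj: "inj_on g UNIV" and im: "g ` UNIV = UNIV"
    by (simp_all add: bij_def)
  have "(\<lambda>x. \<bar>det (matrix L)\<bar> *\<^sub>R h (g x)) absolutely_integrable_on UNIV \<and>
        integral UNIV (\<lambda>x. \<bar>det (matrix L)\<bar> *\<^sub>R h (g x)) = integral UNIV h"
    using has_absolute_integral_change_of_variables[of UNIV g "\<lambda>x. L" h "integral UNIV h"] der inj im h
    by simp
  then have hg: "(\<lambda>x. h (g x)) absolutely_integrable_on UNIV"
     and hgi: "integral UNIV (\<lambda>x. h (g x)) = integral UNIV h"
    using det by simp_all
  have fg: "(\<lambda>x. f (g x)) = complex_of_vec \<circ> (\<lambda>x. h (g x))"
    by (simp add: h_def fun_eq_iff)
  have "integral UNIV (\<lambda>x. f (g x)) = complex_of_vec (integral UNIV (\<lambda>x. h (g x)))"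
    unfolding fg
    by (rule integral_linear[OF _ bounded_linear_complex_of_vec])
       (use hg absolutely_integrable_on_def in blast)
  also have "\<dots> = complex_of_vec (integral UNIV h)" by (simp add: hgi)
  also have "\<dots> = integral UNIV (complex_of_vec \<circ> h)"
    by (rule integral_linear[symmetric, OF _ bounded_linear_complex_of_vec])
       (use h absolutely_integrable_on_def in blast)
  also have "complex_of_vec \<circ> h = f" by (simp add: h_def fun_eq_iff)
  finally show ?thesis by (simp add: g_def)
qed

lemma integral_translate:
  fixes G :: "real^'n::{finite,wellorder} \<Rightarrow> complex"
  assumes "G absolutely_integrable_on S"
  shows "integral {x. x + c \<in> S} (\<lambda>x. G (x + c)) = integral S G"
proof -
  have "integral {x. x + c \<in> S} (\<lambda>x. G (x + c))
      = integral UNIV (\<lambda>x. if x \<in> {x. x + c \<in> S} then G (x + c) else 0)"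
    by (rule Henstock_Kurzweil_Integration.integral_restrict_UNIV[symmetric])
  also have "\<dots> = integral UNIV (\<lambda>z. if z \<in> S then G z else 0)"
    using integral_unimodular_affine[of "\<lambda>x. x" "\<lambda>z. if z \<in> S then G z else 0" c]
      absolutely_integrable_restrict_UNIV[THEN iffD2, OF assms]
    by (simp add: linear_ident matrix_id_mat_1[unfolded id_def])
  finally show ?thesis by (simp add: Henstock_Kurzweil_Integration.integral_restrict_UNIV)
qed

lemma absolutely_integrable_on_compact:
  fixes G :: "'a::euclidean_space \<Rightarrow> 'b::euclidean_space"
  assumes "compact K" "continuous_on UNIV G"
  shows "G absolutely_integrable_on K"
proof -
  obtain a b where K: "K \<subseteq> cbox a b"
    using compact_imp_bounded[OF assms(1)] bounded_subset_cbox_symmetric by metis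
  have "G absolutely_integrable_on cbox a b"
    by (rule absolutely_integrable_continuous) (use assms continuous_on_subset in blast)
  moreover have "K \<in> sets lebesgue" using assms(1) lmeasurable_compact by blast
  ultimately show ?thesis using K set_integrable_subset by blast
qed

lemma integrable_on_compact:
  fixes G :: "'a::euclidean_space \<Rightarrow> 'b::euclidean_space"
  assumes "compact K" "continuous_on UNIV G"
  shows "G integrable_on K"
  using absolutely_integrable_on_compact[OF assms] set_lebesgue_integral_eq_integral(1) by blast

lemma integral_eq_sum_over_partition:
  fixes G :: "'a::euclidean_space \<Rightarrow> 'b::banach"
  assumes "finite I" and "negligible N"
    and partition: "\<And>x. x \<in> S - N \<Longrightarrow> \<exists>!i. i \<in> I \<and> x \<in> A i"
    and integrable: "\<And>i. i \<in> I \<Longrightarrow> G integrable_on (S \<inter> A i)"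
  shows "integral S G = (\<Sum>i\<in>I. integral (S \<inter> A i) G)"
proof -
  have "integral S G = integral UNIV (\<lambda>x. if x \<in> S then G x else 0)"
    by (simp add: Henstock_Kurzweil_Integration.integral_restrict_UNIV)
  also have "\<dots> = integral UNIV (\<lambda>x. \<Sum>i\<in>I. if x \<in> S \<inter> A i then G x else 0)"
  proof (rule integral_spike[OF \<open>negligible N\<close>])
    fix x assume x: "x \<in> UNIV - N"
    show "(\<Sum>i\<in>I. if x \<in> S \<inter> A i then G x else 0) = (if x \<in> S then G x else 0)"
    proof (cases "x \<in> S")
      case True
      with x have "\<exists>!i. i \<in> I \<and> x \<in> A i" by (intro partition) simp
      then obtain i where i: "i \<in> I" "x \<in> A i" and unique: "\<And>j. j \<in> I \<Longrightarrow> x \<in> A j \<Longrightarrow> j = i"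
        by (elim ex1E) blast
      have "(\<Sum>j\<in>I. if x \<in> S \<inter> A j then G x else 0) = (\<Sum>j\<in>I. if j = i then G x else 0)"
        by (intro sum.cong refl) (use True i(2) in \<open>auto dest: unique\<close>)
      then show ?thesis using True i \<open>finite I\<close> by simp
    qed simp
  qed
  also have "\<dots> = (\<Sum>i\<in>I. integral UNIV (\<lambda>x. if x \<in> S \<inter> A i then G x else 0))"
    by (rule integral_sum[OF \<open>finite I\<close>]) (simp only: Henstock_Kurzweil_Integration.integrable_restrict_UNIV integrable)
  also have "\<dots> = (\<Sum>i\<in>I. integral (S \<inter> A i) G)"
    by (simp only: Henstock_Kurzweil_Integration.integral_restrict_UNIV)
  finally show ?thesis .
qed

lemma negligible_inner_Ints:
  fixes a :: "'a::euclidean_space"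
  assumes "a \<noteq> 0"
  shows "negligible {x. a \<bullet> x - b \<in> \<int>}"
proof -
  have "{x. a \<bullet> x - b \<in> \<int>} = (\<Union>n::int. {x. a \<bullet> x = of_int n + b})"
    by (auto simp: Ints_def)
  also have "negligible \<dots>"
    by (rule negligible_countable_Union) (auto intro: negligible_hyperplane simp: assms)
  finally show ?thesis .
qed

lemma negligible_some_nth_Ints: "negligible {x::real^'n. \<exists>j. x $ j - v $ j \<in> \<int>}"
proof -
  have "{x::real^'n. \<exists>j. x $ j - v $ j \<in> \<int>} = (\<Union>j. {x. axis j 1 \<bullet> x - v $ j \<in> \<int>})"
    by (simp add: inner_axis' set_eq_iff)
  also have "negligible \<dots>"
    by (rule negligible_Union) (auto intro!: negligible_inner_Ints simp: axis_eq_0_iff)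
  finally show ?thesis .
qed

section \<open>Periodic functions and the unit cube\<close>

definition int_periodic :: "(real^'n \<Rightarrow> 'a) \<Rightarrow> bool" where
  "int_periodic G \<longleftrightarrow> (\<forall>x. \<forall>p\<in>int_vecs. G (x + p) = G x)"

definition cube :: "(real^'n) set" where
  "cube = cbox 0 1"

definition unit_shifts :: "(real^'n) set" where
  "unit_shifts = {p. \<forall>i. p $ i \<in> {-1, 0, 1}}"

lemma mem_cube: "x \<in> cube \<longleftrightarrow> (\<forall>i. 0 \<le> x $ i \<and> x $ i \<le> 1)"
  by (simp add: cube_def mem_box_cart)

lemma compact_cube: "compact cube"
  by (simp add: cube_def)

lemma finite_unit_shifts: "finite (unit_shifts :: (real^'n) set)"
proof -
  have "(unit_shifts :: (real^'n) set) \<subseteq> (\<lambda>f. \<chi> i. f i) ` (Pi\<^sub>E UNIV (\<lambda>_. {-1, 0, 1::real}))"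
  proof
    fix p :: "real^'n" assume "p \<in> unit_shifts"
    then have "(\<lambda>i. p $ i) \<in> Pi\<^sub>E UNIV (\<lambda>_. {-1, 0, 1})" by (auto simp: unit_shifts_def PiE_iff)
    moreover have "p = (\<chi> i. (\<lambda>i. p $ i) i)" by simp
    ultimately show "p \<in> (\<lambda>f. \<chi> i. f i) ` (Pi\<^sub>E UNIV (\<lambda>_. {-1, 0, 1::real}))" by blast
  qed
  then show ?thesis by (rule finite_subset) (intro finite_imageI finite_PiE; simp)
qed

lemma unit_shifts_int_vecs: assumes "p \<in> unit_shifts" shows "p \<in> int_vecs"
proof -
  have "p $ i = -1 \<or> p $ i = 0 \<or> p $ i = 1" for i
    using assms by (simp add: unit_shifts_def)
  then have "p $ i \<in> \<int>" for i by (metis Ints_0 Ints_1 Ints_minus)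
  then show ?thesis by (simp add: int_vecs_def)
qed

lemma uminus_unit_shifts [simp]: "- p \<in> unit_shifts \<longleftrightarrow> p \<in> unit_shifts"
proof -
  have "- x \<in> {-1, 0, 1::real} \<longleftrightarrow> x \<in> {-1, 0, 1}" for x by auto
  then show ?thesis by (simp add: unit_shifts_def)
qed

lemma closed_shift_preimage:
  fixes S :: "'a::real_normed_vector set"
  assumes "closed S"
  shows "closed {x. x + p \<in> S}"
  using continuous_closed_vimage[OF assms, of "\<lambda>x. x + p"] by (simp add: vimage_def continuous_intros)

lemma add_in_cube_iff:
  assumes w: "\<And>j. w $ j \<notin> \<int>" and p: "p \<in> int_vecs"
  shows "w + p \<in> cube \<longleftrightarrow> (\<forall>j. p $ j = - of_int \<lfloor>w $ j\<rfloor>)"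
proof -
  have "0 \<le> w $ j + p $ j \<and> w $ j + p $ j \<le> 1 \<longleftrightarrow> p $ j = - of_int \<lfloor>w $ j\<rfloor>" for j
  proof -
    obtain m where m: "p $ j = of_int m"
      using p Ints_cases by (auto simp: int_vecs_def)
    have "w $ j \<noteq> 1 - of_int m"
      using w by (metis Ints_1 Ints_diff Ints_of_int)
    then have "0 \<le> w $ j + p $ j \<and> w $ j + p $ j \<le> 1 \<longleftrightarrow> of_int (- m) \<le> w $ j \<and> w $ j < of_int (- m) + 1"
      unfolding m of_int_minus by linarith
    also have "\<dots> \<longleftrightarrow> - m = \<lfloor>w $ j\<rfloor>"
      by (simp only: floor_eq_iff eq_commute[of "- m"])
    also have "\<dots> \<longleftrightarrow> p $ j = - of_int \<lfloor>w $ j\<rfloor>"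
      unfolding m by (metis minus_minus of_int_eq_iff of_int_minus)
    finally show ?thesis .
  qed
  then show ?thesis by (simp add: mem_cube)
qed

lemma ex1_unit_shift_into_cube:
  assumes w: "\<And>j. w $ j \<notin> \<int>" and bounds: "\<And>j. -1 \<le> w $ j \<and> w $ j \<le> 2"
  shows "\<exists>!p. p \<in> unit_shifts \<and> w + p \<in> cube"
proof -
  define p where "p = (\<chi> j. - (of_int \<lfloor>w $ j\<rfloor> :: real))"
  have "\<lfloor>w $ j\<rfloor> \<in> {-1, 0, 1}" for j
  proof -
    have "w $ j \<noteq> 2" using w[of j] by (metis Ints_numeral)
    then have "-1 \<le> \<lfloor>w $ j\<rfloor>" "\<lfloor>w $ j\<rfloor> \<le> 1"
      using bounds[of j] by (simp_all add: le_floor_iff floor_le_iff)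
    then have "\<lfloor>w $ j\<rfloor> = -1 \<or> \<lfloor>w $ j\<rfloor> = 0 \<or> \<lfloor>w $ j\<rfloor> = 1" by arith
    then show ?thesis by auto
  qed
  then have "p \<in> unit_shifts" by (force simp: unit_shifts_def p_def)
  moreover have "w + q \<in> cube \<longleftrightarrow> q = p" if "q \<in> unit_shifts" for q
    using add_in_cube_iff[OF w unit_shifts_int_vecs[OF that]] by (auto simp: p_def vec_eq_iff)
  ultimately show ?thesis by blast
qed

text \<open>Cutting \<open>S\<close> along the integer grid and shifting the pieces back into the cube.\<close>

lemma integral_fold_into_cube:
  fixes G :: "real^'n::{finite,wellorder} \<Rightarrow> complex"
  assumes G: "continuous_on UNIV G" "int_periodic G"
    and S: "compact S" "\<And>z i. z \<in> S \<Longrightarrow> -1 \<le> z $ i \<and> z $ i \<le> 2"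
  shows "integral S G = (\<Sum>p\<in>unit_shifts. integral (cube \<inter> {x. x + p \<in> S}) G)"
proof -
  have piece: "compact (S \<inter> {z. z + - p \<in> cube})" for p
    by (intro compact_Int_closed S closed_shift_preimage compact_imp_closed compact_cube)
  have "integral S G = (\<Sum>p\<in>unit_shifts. integral (S \<inter> {z. z + - p \<in> cube}) G)"
  proof (rule integral_eq_sum_over_partition[OF finite_unit_shifts negligible_some_nth_Ints[of 0]])
    fix z assume z: "z \<in> S - {x. \<exists>j. x $ j - 0 $ j \<in> \<int>}"
    then have "\<exists>!q. q \<in> unit_shifts \<and> z + q \<in> cube"
      by (intro ex1_unit_shift_into_cube) (use S(2) in auto)
    then obtain q where q: "q \<in> unit_shifts" "z + q \<in> cube"
      and unique: "\<And>q'. q' \<in> unit_shifts \<Longrightarrow> z + q' \<in> cube \<Longrightarrow> q' = q"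
      by (elim ex1E) blast
    show "\<exists>!p. p \<in> unit_shifts \<and> z \<in> {z. z + - p \<in> cube}"
    proof (rule ex1I[of _ "- q"])
      show "- q \<in> unit_shifts \<and> z \<in> {z. z + - (- q) \<in> cube}" using q by simp
      show "p = - q" if "p \<in> unit_shifts \<and> z \<in> {z. z + - p \<in> cube}" for p
        using unique[of "- p"] that by force
    qed
  qed (rule integrable_on_compact[OF piece G(1)])
  also have "\<dots> = (\<Sum>p\<in>unit_shifts. integral (cube \<inter> {x. x + p \<in> S}) G)"
  proof (rule sum.cong[OF refl])
    fix p :: "real^'n::{finite,wellorder}" assume "p \<in> unit_shifts"
    then have periodic: "G (x + p) = G x" for x
      using G(2) unit_shifts_int_vecs by (auto simp: int_periodic_def)
    have "integral (S \<inter> {z. z + - p \<in> cube}) G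
        = integral {x. x + p \<in> S \<inter> {z. z + - p \<in> cube}} (\<lambda>x. G (x + p))"
      by (rule integral_translate[symmetric]) (rule absolutely_integrable_on_compact[OF piece G(1)])
    also have "{x. x + p \<in> S \<inter> {z. z + - p \<in> cube}} = cube \<inter> {x. x + p \<in> S}"
      by auto
    finally show "integral (S \<inter> {z. z + - p \<in> cube}) G = integral (cube \<inter> {x. x + p \<in> S}) G"
      by (simp add: periodic)
  qed
  finally show ?thesis .
qed

lemma integral_cube_translate:
  fixes g :: "real^'n::{finite,wellorder} \<Rightarrow> complex"
  assumes g: "continuous_on UNIV g" "int_periodic g" and v: "v \<in> cube"
  shows "integral cube (\<lambda>x. g (x + v)) = integral cube g"
proof -
  define S where "S = (+) v ` cube"
  have S: "compact S"
    unfolding S_def by (intro compact_translation compact_cube)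
  have mem_S: "z \<in> S \<longleftrightarrow> z - v \<in> cube" for z
    by (force simp: S_def image_iff algebra_simps)
  have "integral cube (\<lambda>x. g (x + v)) = integral S g"
    using integral_translate[OF absolutely_integrable_on_compact[OF S g(1)], of v]
    by (simp add: mem_S)
  also have "\<dots> = (\<Sum>p\<in>unit_shifts. integral (cube \<inter> {x. x + p \<in> S}) g)"
  proof (rule integral_fold_into_cube[OF g S])
    show "-1 \<le> z $ i \<and> z $ i \<le> 2" if "z \<in> S" for z i
      using that v by (auto simp: mem_S mem_cube) (smt (verit))+
  qed
  also have "\<dots> = integral cube g"
  proof (rule integral_eq_sum_over_partition[OF finite_unit_shifts negligible_some_nth_Ints[of v], symmetric])
    fix x assume x: "x \<in> cube - {x. \<exists>j. x $ j - v $ j \<in> \<int>}"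
    have "0 \<le> x $ j \<and> x $ j \<le> 1" "0 \<le> v $ j \<and> v $ j \<le> 1" for j
      using x v by (auto simp: mem_cube)
    then have "-1 \<le> (x - v) $ j \<and> (x - v) $ j \<le> 2" for j
      by (smt (verit) vector_minus_component)
    then have "\<exists>!p. p \<in> unit_shifts \<and> (x - v) + p \<in> cube"
      by (intro ex1_unit_shift_into_cube) (use x in auto)
    then show "\<exists>!p. p \<in> unit_shifts \<and> x \<in> {x. x + p \<in> S}"
      by (simp add: mem_S algebra_simps)
  next
    show "g integrable_on (cube \<inter> {x. x + p \<in> S})" for p
      by (intro integrable_on_compact[OF _ g(1)] compact_Int_closed compact_cube
          closed_shift_preimage compact_imp_closed S)
  qed
  finally show ?thesis .
qed

section \<open>The alcove tiles the cube\<close>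

lemma triH_param_eq:
  "triH_param = {x. 0 \<le> x$1 - x$2 \<and> x$1 - x$2 \<le> 1 \<and> 0 \<le> x$2 - x$3 \<and> x$2 - x$3 \<le> 1 \<and>
     0 \<le> x$3 + (x$1 + x$2 + x$3) \<and> x$3 + (x$1 + x$2 + x$3) \<le> 1 \<and>
     0 \<le> x$1 + (x$1 + x$2 + x$3) \<and> x$1 + (x$1 + x$2 + x$3) \<le> 1}"
  by (auto simp: triH_param_def triH_def sum_4)

lemma abs_embH_le: "x \<in> triH_param \<Longrightarrow> \<bar>embH x $ m\<bar> \<le> 3/4"
  using exhaust_4[of m] unfolding triH_param_eq by auto

lemma compact_triH_param: "compact triH_param"
proof -
  have "closed triH_param"
    unfolding triH_param_eq by (intro closed_Collect_conj closed_Collect_le continuous_intros)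
  moreover have "triH_param \<subseteq> cbox (-1) 1"
  proof
    fix x assume x: "x \<in> triH_param"
    have "-1 \<le> x $ i \<and> x $ i \<le> 1" for i
    proof -
      have "\<bar>x $ i\<bar> \<le> 3/4"
        using abs_embH_le[OF x, of 1] abs_embH_le[OF x, of 2] abs_embH_le[OF x, of 3] exhaust_3[of i]
        by auto
      then show ?thesis by linarith
    qed
    then show "x \<in> cbox (-1) 1" by (simp add: mem_box_cart)
  qed
  ultimately show ?thesis
    using bounded_cbox bounded_subset compact_eq_bounded_closed by blast
qed

lemma permH_in_triH_param_iff:
  assumes "\<sigma> permutes UNIV"
  shows "permH \<sigma> z \<in> triH_param \<longleftrightarrow>
    embH z $ \<sigma> 2 \<le> embH z $ \<sigma> 1 \<and> embH z $ \<sigma> 3 \<le> embH z $ \<sigma> 2 \<and>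
    embH z $ \<sigma> 4 \<le> embH z $ \<sigma> 3 \<and> embH z $ \<sigma> 1 - embH z $ \<sigma> 4 \<le> 1"
proof -
  have "(\<Sum>i\<in>UNIV. embH z $ \<sigma> i) = 0"
    using sum_permute_nth[OF assms, of "embH z"] sum_embH[of z] by simp
  moreover have "permH \<sigma> z \<in> triH_param \<longleftrightarrow> pvec (embH z) \<sigma> \<in> triH"
    by (simp add: triH_param_def embH_permH[OF assms])
  ultimately show ?thesis
    by (auto simp: triH_def)
qed

definition decreasing_along :: "(4 \<Rightarrow> 'a::linorder) \<Rightarrow> (4 \<Rightarrow> 4) \<Rightarrow> bool" where
  "decreasing_along u \<sigma> \<longleftrightarrow> u (\<sigma> 2) < u (\<sigma> 1) \<and> u (\<sigma> 3) < u (\<sigma> 2) \<and> u (\<sigma> 4) < u (\<sigma> 3)"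

lemma permutes_4_cases: "(\<sigma> :: 4 \<Rightarrow> 4) permutes UNIV \<Longrightarrow> k = \<sigma> 1 \<or> k = \<sigma> 2 \<or> k = \<sigma> 3 \<or> k = \<sigma> 4"
  using permutes_inverses(1)[of \<sigma> UNIV k] exhaust_4[of "inv \<sigma> k"] by metis

lemma permutes_4_of_distinct:
  assumes "distinct [a, b, c, d :: 4]"
  shows "(\<lambda>i. if i = 1 then a else if i = 2 then b else if i = 3 then c else d) permutes UNIV"
proof -
  let ?p = "\<lambda>i::4. if i = 1 then a else if i = 2 then b else if i = 3 then c else d"
  have "inj ?p"
  proof (rule injI)
    fix i j assume "?p i = ?p j"
    then show "i = j" using assms exhaust_4[of i] exhaust_4[of j] by auto
  qed
  then show ?thesis
    using finite_UNIV_inj_surj[of ?p] by (auto intro: bij_imp_permutes simp: bij_def)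
qed

lemma ex_max_on:
  fixes u :: "'a \<Rightarrow> 'b::linorder"
  assumes "finite A" "A \<noteq> {}"
  shows "\<exists>a\<in>A. \<forall>k\<in>A. u k \<le> u a"
proof -
  have "Max (u ` A) \<in> u ` A" using assms by (intro Max_in) auto
  then obtain a where "a \<in> A" "u a = Max (u ` A)" by (metis imageE)
  then show ?thesis using assms by (intro bexI[of _ a]) (auto intro!: Max_ge)
qed

lemma ex_decreasing_along:
  fixes u :: "4 \<Rightarrow> 'a::linorder"
  assumes "inj u"
  shows "\<exists>\<sigma>. \<sigma> permutes UNIV \<and> decreasing_along u \<sigma>"
proof -
  have nonempty: "UNIV - X \<noteq> {}" if "card X \<le> 3" for X :: "4 set"
  proof
    assume "UNIV - X = {}"
    then have "X = UNIV" by auto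
    then show False using that by simp
  qed
  obtain a where a: "\<forall>k. u k \<le> u a"
    using ex_max_on[of UNIV u] by auto
  obtain b where b: "b \<noteq> a" "\<forall>k. k \<noteq> a \<longrightarrow> u k \<le> u b"
    using ex_max_on[of "UNIV - {a}" u] nonempty[of "{a}"] by auto
  have "card {a, b} \<le> 3" by (intro card_insert_le_m1) auto
  then obtain c where c: "c \<noteq> a" "c \<noteq> b" "\<forall>k. k \<noteq> a \<and> k \<noteq> b \<longrightarrow> u k \<le> u c"
    using ex_max_on[of "UNIV - {a, b}" u] nonempty[of "{a, b}"] by auto
  have "card {a, b, c} \<le> 3" by (intro card_insert_le_m1) auto
  then obtain d where d: "d \<noteq> a" "d \<noteq> b" "d \<noteq> c"
    using nonempty[of "{a, b, c}"] by auto
  have "u b < u a" "u c < u b" "u d < u c"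
    using a b c d \<open>inj u\<close> by (metis injD order_le_neq_trans)+
  moreover have "distinct [a, b, c, d]" using b c d by auto
  ultimately show ?thesis
    by (intro exI[of _ "\<lambda>i. if i = 1 then a else if i = 2 then b else if i = 3 then c else d"])
       (simp add: permutes_4_of_distinct decreasing_along_def)
qed

lemma decreasing_along_unique:
  fixes u :: "4 \<Rightarrow> real"
  assumes "inj u"
    and \<sigma>: "\<sigma> permutes UNIV" "decreasing_along u \<sigma>"
    and \<tau>: "\<tau> permutes UNIV" "decreasing_along u \<tau>"
  shows "\<sigma> = \<tau>"
proof -
  have u\<sigma>: "u (\<sigma> 2) < u (\<sigma> 1)" "u (\<sigma> 3) < u (\<sigma> 2)" "u (\<sigma> 4) < u (\<sigma> 3)"
    and u\<tau>: "u (\<tau> 2) < u (\<tau> 1)" "u (\<tau> 3) < u (\<tau> 2)" "u (\<tau> 4) < u (\<tau> 3)"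
    using \<sigma>(2) \<tau>(2) by (auto simp: decreasing_along_def)
  have \<sigma>_inj: "\<sigma> i = \<sigma> j \<Longrightarrow> i = j" and \<tau>_inj: "\<tau> i = \<tau> j \<Longrightarrow> i = j" for i j
    using permutes_inj[OF \<sigma>(1)] permutes_inj[OF \<tau>(1)] by (metis injD)+
  have \<sigma>1: "u k \<le> u (\<sigma> 1)" and \<sigma>4: "u (\<sigma> 4) \<le> u k" for k
    using permutes_4_cases[OF \<sigma>(1), of k] u\<sigma> by auto
  have \<tau>1: "u k \<le> u (\<tau> 1)" and \<tau>4: "u (\<tau> 4) \<le> u k" for k
    using permutes_4_cases[OF \<tau>(1), of k] u\<tau> by auto
  have \<sigma>2: "k \<noteq> \<sigma> 1 \<Longrightarrow> u k \<le> u (\<sigma> 2)" for k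
    using permutes_4_cases[OF \<sigma>(1), of k] u\<sigma> by auto
  have \<tau>2: "k \<noteq> \<tau> 1 \<Longrightarrow> u k \<le> u (\<tau> 2)" for k
    using permutes_4_cases[OF \<tau>(1), of k] u\<tau> by auto
  have 1: "\<sigma> 1 = \<tau> 1"
    using \<sigma>1[of "\<tau> 1"] \<tau>1[of "\<sigma> 1"] \<open>inj u\<close> by (simp add: injD order_antisym)
  have 4: "\<sigma> 4 = \<tau> 4"
    using \<sigma>4[of "\<tau> 4"] \<tau>4[of "\<sigma> 4"] \<open>inj u\<close> by (simp add: injD order_antisym)
  have "\<sigma> 2 \<noteq> \<sigma> 1" "\<tau> 2 \<noteq> \<tau> 1"
    using \<sigma>_inj[of 2 1] \<tau>_inj[of 2 1] by auto
  then have 2: "\<sigma> 2 = \<tau> 2"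
    using \<sigma>2[of "\<tau> 2"] \<tau>2[of "\<sigma> 2"] 1 \<open>inj u\<close> by (metis injD order_antisym)
  have "\<sigma> 3 \<noteq> \<tau> 1" "\<sigma> 3 \<noteq> \<tau> 2" "\<sigma> 3 \<noteq> \<tau> 4"
    using \<sigma>_inj[of 3 1] \<sigma>_inj[of 3 2] \<sigma>_inj[of 3 4] 1 2 4 by auto
  then have 3: "\<sigma> 3 = \<tau> 3"
    using permutes_4_cases[OF \<tau>(1), of "\<sigma> 3"] by auto
  show ?thesis
  proof
    fix i show "\<sigma> i = \<tau> i" using exhaust_4[of i] 1 2 3 4 by auto
  qed
qed

definition walls :: "(real^3) set" where
  "walls = {x. \<exists>m m'. m \<noteq> m' \<and> embH x $ m - embH x $ m' \<in> \<int>} \<union> {x. \<exists>m. embH x $ m \<in> \<int>}"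

definition coord_vec :: "4 \<Rightarrow> real^3" where
  "coord_vec m = (\<chi> i. embH (axis i 1) $ m)"

lemma inner_coord_vec: "coord_vec m \<bullet> x = embH x $ m"
  using exhaust_4[of m] by (auto simp: coord_vec_def inner_vec_def sum_3 axis_def)

text \<open>The test vector \<open>(1, 2, 4)\<close> has the pairwise distinct nonzero coordinates \<open>1, 2, 4, -7\<close> in \<open>\<real>\<^sup>4\<^sub>H\<close>.\<close>

lemma coord_vec_nonzero: "coord_vec m \<noteq> 0"
proof
  assume "coord_vec m = 0"
  then have "embH (vector [1, 2, 4]) $ m = 0" by (metis inner_zero_left inner_coord_vec)
  then show False using exhaust_4[of m] by auto
qed

lemma coord_vec_inj: "coord_vec m = coord_vec m' \<Longrightarrow> m = m'"
proof -
  assume "coord_vec m = coord_vec m'"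
  then have "embH (vector [1, 2, 4]) $ m = embH (vector [1, 2, 4]) $ m'" by (metis inner_coord_vec)
  then show "m = m'" using exhaust_4[of m] exhaust_4[of m'] by auto
qed

lemma negligible_walls: "negligible walls"
proof -
  have "walls = (\<Union>(m, m') \<in> {(m, m'). m \<noteq> m'}. {x. (coord_vec m - coord_vec m') \<bullet> x \<in> \<int>})
              \<union> (\<Union>m. {x. coord_vec m \<bullet> x \<in> \<int>})"
    by (auto simp: walls_def inner_diff_left inner_coord_vec)
  also have "negligible \<dots>"
    by (intro negligible_Un negligible_Union)
       (auto intro!: negligible_inner_Ints[of _ 0, simplified] simp: coord_vec_nonzero dest: coord_vec_inj)
  finally show ?thesis .
qed

lemma not_in_walls_add:
  assumes x: "x \<notin> walls" and p: "p \<in> int_vecs"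
  shows "x + p \<notin> walls"
proof -
  have p_Ints: "embH p $ m \<in> \<int>" for m
    using embH_Ints[OF p] .
  have "embH (x + p) $ m - embH (x + p) $ m' \<notin> \<int>" if "m \<noteq> m'" for m m'
  proof
    assume "embH (x + p) $ m - embH (x + p) $ m' \<in> \<int>"
    moreover have "embH p $ m - embH p $ m' \<in> \<int>"
      using p_Ints by (intro Ints_diff)
    ultimately have "(embH (x + p) $ m - embH (x + p) $ m') - (embH p $ m - embH p $ m') \<in> \<int>"
      by (rule Ints_diff)
    then have "embH x $ m - embH x $ m' \<in> \<int>"
      by (simp add: embH_add)
    then show False using x that by (auto simp: walls_def)
  qed
  moreover have "embH (x + p) $ m \<notin> \<int>" for m
  proof
    assume "embH (x + p) $ m \<in> \<int>"
    then have "embH (x + p) $ m - embH p $ m \<in> \<int>"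
      using p_Ints by (rule Ints_diff)
    then have "embH x $ m \<in> \<int>"
      by (simp add: embH_add)
    then show False using x by (auto simp: walls_def)
  qed
  ultimately show ?thesis by (auto simp: walls_def)
qed

lemma inj_embH_nth:
  assumes "y \<notin> walls"
  shows "inj (\<lambda>m. embH y $ m)"
proof (rule injI)
  fix m m' assume eq: "embH y $ m = embH y $ m'"
  show "m = m'"
  proof (rule ccontr)
    assume "m \<noteq> m'"
    then have "embH y $ m - embH y $ m' \<notin> \<int>" using assms by (auto simp: walls_def)
    then show False using eq by simp
  qed
qed

lemma alcove_shape:
  assumes y: "y \<notin> walls" and \<sigma>: "\<sigma> permutes UNIV" and D: "permH \<sigma> y \<in> triH_param"
  shows "\<And>m m'. m \<noteq> m' \<Longrightarrow> embH y $ m - embH y $ m' < 1"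
    and "decreasing_along (\<lambda>m. embH y $ m) \<sigma>"
proof -
  define u where "u m = embH y $ m" for m
  have w: "u (\<sigma> 2) \<le> u (\<sigma> 1)" "u (\<sigma> 3) \<le> u (\<sigma> 2)" "u (\<sigma> 4) \<le> u (\<sigma> 3)" "u (\<sigma> 1) - u (\<sigma> 4) \<le> 1"
    using D unfolding permH_in_triH_param_iff[OF \<sigma>] by (auto simp: u_def)
  have range: "u (\<sigma> 4) \<le> u m \<and> u m \<le> u (\<sigma> 1)" for m
    using permutes_4_cases[OF \<sigma>, of m] w by auto
  show "embH y $ m - embH y $ m' < 1" if "m \<noteq> m'" for m m'
  proof -
    have "u m - u m' \<le> 1" using range[of m] range[of m'] w by auto
    moreover have "u m - u m' \<notin> \<int>" using y that by (auto simp: walls_def u_def)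
    then have "u m - u m' \<noteq> 1" by (metis Ints_1)
    ultimately show ?thesis by (simp add: u_def)
  qed
  have "\<sigma> 1 \<noteq> \<sigma> 2" "\<sigma> 2 \<noteq> \<sigma> 3" "\<sigma> 3 \<noteq> \<sigma> 4"
    using permutes_inj[OF \<sigma>] by (simp_all add: inj_eq)
  then have "u (\<sigma> 2) < u (\<sigma> 1)" "u (\<sigma> 3) < u (\<sigma> 2)" "u (\<sigma> 4) < u (\<sigma> 3)"
    using w inj_embH_nth[OF y] unfolding u_def by (metis injD order_le_neq_trans)+
  then show "decreasing_along (\<lambda>m. embH y $ m) \<sigma>"
    by (simp add: decreasing_along_def u_def)
qed

lemma sum_zero_pos_neg:
  fixes l :: "'a \<Rightarrow> real"
  assumes "finite A" "sum l A = 0" "a \<in> A" "l a \<noteq> 0"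
  shows "\<exists>m\<in>A. 0 < l m" and "\<exists>m\<in>A. l m < 0"
proof -
  show "\<exists>m\<in>A. 0 < l m"
  proof (rule ccontr)
    assume "\<not> (\<exists>m\<in>A. 0 < l m)"
    then have "\<forall>m\<in>A. 0 \<le> - l m" by auto
    then have "\<forall>m\<in>A. - l m = 0"
      using sum_nonneg_eq_0_iff[OF \<open>finite A\<close>, of "\<lambda>m. - l m"] assms(2) by (simp add: sum_negf)
    then show False using assms(3,4) by auto
  qed
  show "\<exists>m\<in>A. l m < 0"
  proof (rule ccontr)
    assume "\<not> (\<exists>m\<in>A. l m < 0)"
    then have "\<forall>m\<in>A. 0 \<le> l m" by auto
    then have "\<forall>m\<in>A. l m = 0"
      using sum_nonneg_eq_0_iff[OF \<open>finite A\<close>] assms(2) by blast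
    then show False using assms(3,4) by auto
  qed
qed

text \<open>If the two points differed by a nonzero lattice vector \<open>l\<close>, then \<open>l\<^sub>m \<ge> 1\<close> and \<open>l\<^sub>m\<^sub>' \<le> -1\<close> for
  some \<open>m, m'\<close>, and one of the two points would have a coordinate difference \<open>t\<^sub>m - t\<^sub>m\<^sub>' > 1\<close>.\<close>

lemma alcove_unique:
  assumes y: "y \<notin> walls" and l: "y' - y \<in> int_vecs"
    and \<sigma>: "\<sigma> permutes UNIV" "permH \<sigma> y \<in> triH_param"
    and \<sigma>': "\<sigma>' permutes UNIV" "permH \<sigma>' y' \<in> triH_param"
  shows "\<sigma> = \<sigma>' \<and> y = y'"
proof -
  have y': "y' \<notin> walls"
    using not_in_walls_add[OF y l] by simp
  define l where "l m = embH (y' - y) $ m" for m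
  have shift: "embH y' $ m = embH y $ m + l m" for m
    by (simp add: l_def embH_diff)
  have l_Ints: "l m \<in> \<int>" for m
    unfolding l_def by (rule embH_Ints[OF l])
  have "y = y'"
  proof (rule ccontr)
    assume "y \<noteq> y'"
    then obtain i where "y' $ i - y $ i \<noteq> 0" by (metis eq_iff_diff_eq_0 vec_eq_iff)
    then obtain m0 where "l m0 \<noteq> 0"
      using exhaust_3[of i] unfolding l_def by (metis embH_nth(1-3) vector_minus_component)
    moreover have "sum l UNIV = 0" using sum_embH by (simp add: l_def)
    ultimately obtain m m' where "0 < l m" "l m' < 0"
      using sum_zero_pos_neg[of UNIV l m0] by auto
    then have "1 \<le> l m" "l m' \<le> -1"
      using l_Ints[of m] l_Ints[of m'] by (auto elim!: Ints_cases)
    moreover from this have "m \<noteq> m'" by auto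
    then have "embH y $ m' - embH y $ m < 1" "embH y' $ m - embH y' $ m' < 1"
      using alcove_shape(1)[OF y \<sigma>] alcove_shape(1)[OF y' \<sigma>'] by auto
    ultimately show False
      using shift[of m] shift[of m'] by linarith
  qed
  moreover have "\<sigma> = \<sigma>'"
  proof (rule decreasing_along_unique[OF inj_embH_nth[OF y] \<sigma>(1) alcove_shape(2)[OF y \<sigma>] \<sigma>'(1)])
    show "decreasing_along (\<lambda>m. embH y $ m) \<sigma>'"
      using alcove_shape(2)[OF y' \<sigma>'] \<open>y = y'\<close> by simp
  qed
  ultimately show ?thesis by simp
qed

lemma fractional_parts_off_walls:
  assumes x_cube: "x \<in> cube" and x: "x \<notin> walls"
  defines "f \<equiv> \<lambda>m. embH x $ m - of_int \<lfloor>embH x $ m\<rfloor>"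
  shows "\<And>m. 0 < f m \<and> f m < 1" and "inj f"
    and "f 1 = x $ 1" "f 2 = x $ 2" "f 3 = x $ 3"
    and "\<exists>r. (r = 1 \<or> r = 2 \<or> r = 3) \<and> f 4 = embH x $ 4 + of_int r"
proof -
  have not_Ints: "embH x $ m \<notin> \<int>" for m
    using x by (auto simp: walls_def)
  show "0 < f m \<and> f m < 1" for m
  proof -
    have "f m \<noteq> 0"
      using not_Ints[of m] by (auto simp: f_def) (metis Ints_of_int)
    moreover have "0 \<le> f m" "f m < 1"
      using of_int_floor_le[of "embH x $ m"] real_of_int_floor_add_one_gt[of "embH x $ m"]
      unfolding f_def by linarith+
    ultimately show ?thesis by auto
  qed
  show "inj f"
  proof (rule injI)
    fix m m' assume "f m = f m'"
    then have "embH x $ m - embH x $ m' = of_int (\<lfloor>embH x $ m\<rfloor> - \<lfloor>embH x $ m'\<rfloor>)"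
      by (simp add: f_def)
    then have "embH x $ m - embH x $ m' \<in> \<int>" by simp
    then show "m = m'" using x by (auto simp: walls_def)
  qed
  have x01: "0 < x $ i \<and> x $ i < 1" for i
  proof -
    have "x $ i \<notin> \<int>"
      using not_Ints[of 1] not_Ints[of 2] not_Ints[of 3] exhaust_3[of i] by auto
    then have "x $ i \<noteq> 0" "x $ i \<noteq> 1" by (metis Ints_0, metis Ints_1)
    then show ?thesis using x_cube by (auto simp: mem_cube) (metis order_le_less)+
  qed
  have "\<lfloor>x $ i\<rfloor> = 0" for i using x01[of i] by (simp add: floor_eq_iff)
  then show "f 1 = x $ 1" "f 2 = x $ 2" "f 3 = x $ 3" by (simp_all add: f_def)
  have "-3 < embH x $ 4" "embH x $ 4 < 0" using x01[of 1] x01[of 2] x01[of 3] by auto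
  then have "-3 \<le> \<lfloor>embH x $ 4\<rfloor>" "\<lfloor>embH x $ 4\<rfloor> \<le> -1" by (simp_all add: le_floor_iff floor_le_iff)
  then have "- \<lfloor>embH x $ 4\<rfloor> = 1 \<or> - \<lfloor>embH x $ 4\<rfloor> = 2 \<or> - \<lfloor>embH x $ 4\<rfloor> = 3" by arith
  then show "\<exists>r. (r = 1 \<or> r = 2 \<or> r = 3) \<and> f 4 = embH x $ 4 + of_int r"
    by (intro exI[of _ "- \<lfloor>embH x $ 4\<rfloor>"]) (simp add: f_def)
qed

text \<open>The fractional parts of the four coordinates of a point off the walls sum to an integer
  \<open>r \<in> {1, 2, 3}\<close>; lowering the \<open>r\<close> largest of them by \<open>1\<close> is an integer shift that puts all four
  coordinates into a half-open window of width \<open>1\<close>.\<close>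

lemma exists_unit_shift_into_window:
  assumes x_cube: "x \<in> cube" and x: "x \<notin> walls"
  shows "\<exists>p\<in>unit_shifts. \<exists>\<theta>. \<forall>m. \<theta> - 1 \<le> embH (x + p) $ m \<and> embH (x + p) $ m < \<theta>"
proof -
  define f where "f m = embH x $ m - of_int \<lfloor>embH x $ m\<rfloor>" for m
  note f = fractional_parts_off_walls[OF assms, folded f_def]
  obtain r where r: "r = 1 \<or> r = 2 \<or> r = 3" and f4: "f 4 = embH x $ 4 + of_int r"
    using f(6) by blast
  obtain \<sigma> where \<sigma>: "\<sigma> permutes UNIV" "decreasing_along f \<sigma>"
    using ex_decreasing_along[OF f(2)] by blast
  then have f\<sigma>: "f (\<sigma> 2) < f (\<sigma> 1)" "f (\<sigma> 3) < f (\<sigma> 2)" "f (\<sigma> 4) < f (\<sigma> 3)"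
    by (auto simp: decreasing_along_def)
  define \<theta> where "\<theta> = (if r = 1 then f (\<sigma> 1) else if r = 2 then f (\<sigma> 2) else f (\<sigma> 3))"
  define q where "q m = (if \<theta> \<le> f m then 1 else 0 :: real)" for m
  have sum_q: "q 1 + q 2 + q 3 + q 4 = of_int r"
  proof -
    have "q 1 + q 2 + q 3 + q 4 = sum q UNIV" by (simp add: sum_4)
    also have "\<dots> = sum (q \<circ> \<sigma>) UNIV" by (rule sum.permute[OF \<sigma>(1)])
    also have "\<dots> = q (\<sigma> 1) + q (\<sigma> 2) + q (\<sigma> 3) + q (\<sigma> 4)" by (simp add: sum_4)
    also have "\<dots> = of_int r" using r f\<sigma> by (auto simp: q_def \<theta>_def)
    finally show ?thesis .
  qed
  define p :: "real^3" where "p = vector [- q 1, - q 2, - q 3]"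
  have "q m = 0 \<or> q m = 1" for m by (simp add: q_def)
  then have p: "p \<in> unit_shifts"
    unfolding unit_shifts_def p_def by (auto simp: forall_3 vector_3)
  have shifted: "embH (x + p) $ m = f m - q m" for m
  proof -
    have "embH (x + p) $ 4 = embH x $ 4 + (q 1 + q 2 + q 3)" by (simp add: p_def)
    then have "embH (x + p) $ 4 = f 4 - q 4" using sum_q f4 by simp
    then show ?thesis using exhaust_4[of m] f(3-5) by (auto simp: p_def)
  qed
  have "0 < \<theta> \<and> \<theta> < 1" using f(1) by (simp add: \<theta>_def)
  then have "\<theta> - 1 \<le> embH (x + p) $ m \<and> embH (x + p) $ m < \<theta>" for m
    using f(1)[of m] unfolding shifted by (auto simp: q_def)
  then show ?thesis using p by blast
qed

lemma alcove_exists: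
  assumes "x \<in> cube" "x \<notin> walls"
  shows "\<exists>\<sigma> p. \<sigma> permutes UNIV \<and> p \<in> unit_shifts \<and> permH \<sigma> (x + p) \<in> triH_param"
proof -
  obtain p \<theta> where p: "p \<in> unit_shifts" and window: "\<And>m. \<theta> - 1 \<le> embH (x + p) $ m \<and> embH (x + p) $ m < \<theta>"
    using exists_unit_shift_into_window[OF assms] by blast
  have "x + p \<notin> walls"
    using not_in_walls_add[OF assms(2) unit_shifts_int_vecs[OF p]] .
  then obtain \<sigma> where \<sigma>: "\<sigma> permutes UNIV" "decreasing_along (\<lambda>m. embH (x + p) $ m) \<sigma>"
    using ex_decreasing_along[OF inj_embH_nth] by blast
  have "permH \<sigma> (x + p) \<in> triH_param"
    unfolding permH_in_triH_param_iff[OF \<sigma>(1)]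
    using \<sigma>(2) window[of "\<sigma> 1"] window[of "\<sigma> 4"] by (auto simp: decreasing_along_def)
  then show ?thesis using \<sigma>(1) p by blast
qed

definition cell :: "(4 \<Rightarrow> 4) \<Rightarrow> (real^3) set" where
  "cell \<sigma> = {z. permH \<sigma> z \<in> triH_param}"

lemma cell_eq_image: "\<sigma> permutes UNIV \<Longrightarrow> cell \<sigma> = permH (inv \<sigma>) ` triH_param"
  unfolding cell_def by (auto simp: image_iff permH_inv permH_inv') (metis permH_inv)

lemma compact_cell: "\<sigma> permutes UNIV \<Longrightarrow> compact (cell \<sigma>)"
  unfolding cell_eq_image
  by (intro compact_continuous_image linear_continuous_on compact_triH_param)
     (simp add: linear_permH linear_linear)

lemma cell_bounds:
  assumes "\<sigma> permutes UNIV" "z \<in> cell \<sigma>"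
  shows "-1 \<le> z $ i \<and> z $ i \<le> 2"
proof -
  obtain y where y: "y \<in> triH_param" "z = permH (inv \<sigma>) y"
    using assms by (auto simp: cell_eq_image)
  obtain m where "permH (inv \<sigma>) y $ i = embH y $ m"
    using permH_nth_ex by blast
  then show ?thesis using abs_embH_le[OF y(1), of m] y(2) by auto
qed

lemma integral_cell:
  fixes G :: "real^3 \<Rightarrow> complex"
  assumes cont: "continuous_on UNIV G" and invariant: "\<And>\<sigma> x. \<sigma> permutes UNIV \<Longrightarrow> G (permH \<sigma> x) = G x"
    and \<sigma>: "\<sigma> permutes UNIV"
  shows "integral (cell \<sigma>) G = integral triH_param G"
proof -
  define f where "f y = (if y \<in> triH_param then G y else 0)" for y
  have f: "f absolutely_integrable_on UNIV"
    unfolding f_def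
    by (rule absolutely_integrable_restrict_UNIV[THEN iffD2, OF absolutely_integrable_on_compact[OF compact_triH_param cont]])
  have "integral (cell \<sigma>) G = integral UNIV (\<lambda>z. if z \<in> cell \<sigma> then G z else 0)"
    by (rule Henstock_Kurzweil_Integration.integral_restrict_UNIV[symmetric])
  also have "\<dots> = integral UNIV (\<lambda>z. f (permH \<sigma> z + 0))"
    by (intro arg_cong[of _ _ "integral UNIV"] ext) (simp add: f_def cell_def invariant[OF \<sigma>])
  also have "\<dots> = integral UNIV f"
    by (rule integral_unimodular_affine[OF linear_permH abs_det_permH[OF \<sigma>] f])
  also have "\<dots> = integral triH_param G"
    by (simp add: f_def[abs_def] Henstock_Kurzweil_Integration.integral_restrict_UNIV)
  finally show ?thesis .
qed

lemma ex1_alcove_translate: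
  assumes "x \<in> cube" "x \<notin> walls"
  shows "\<exists>!i. i \<in> G4 \<times> unit_shifts \<and> x + snd i \<in> cell (fst i)"
proof -
  obtain \<sigma> p where \<sigma>p: "\<sigma> permutes UNIV" "p \<in> unit_shifts" "permH \<sigma> (x + p) \<in> triH_param"
    using alcove_exists[OF assms] by blast
  show ?thesis
  proof (rule ex1I[of _ "(\<sigma>, p)"])
    show "(\<sigma>, p) \<in> G4 \<times> unit_shifts \<and> x + snd (\<sigma>, p) \<in> cell (fst (\<sigma>, p))"
      using \<sigma>p by (simp add: cell_def)
    fix i assume i: "i \<in> G4 \<times> unit_shifts \<and> x + snd i \<in> cell (fst i)"
    then obtain \<tau> q where i_eq: "i = (\<tau>, q)" and \<tau>: "\<tau> permutes UNIV" and q: "q \<in> unit_shifts"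
      and D: "permH \<tau> (x + q) \<in> triH_param"
      by (cases i) (auto simp: cell_def)
    have "x + q \<notin> walls"
      using assms(2) not_in_walls_add unit_shifts_int_vecs[OF q] by blast
    moreover have "(x + p) - (x + q) \<in> int_vecs"
      using unit_shifts_int_vecs[OF q] unit_shifts_int_vecs[OF \<sigma>p(2)]
      by (auto simp: int_vecs_def)
    ultimately have "\<tau> = \<sigma> \<and> x + q = x + p"
      using alcove_unique[OF _ _ \<tau> D \<sigma>p(1,3)] by blast
    then show "i = (\<sigma>, p)" by (simp add: i_eq)
  qed
qed

text \<open>Up to the null set \<open>walls\<close>, the cube is the disjoint union of the pieces
  \<open>cube \<inter> (cell \<sigma> - p)\<close>, and each cell is reassembled from its pieces by periodicity.\<close>

theorem integral_cube_eq_24_alcove: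
  fixes G :: "real^3 \<Rightarrow> complex"
  assumes cont: "continuous_on UNIV G" and per: "int_periodic G"
    and invariant: "\<And>\<sigma> x. \<sigma> permutes UNIV \<Longrightarrow> G (permH \<sigma> x) = G x"
  shows "integral cube G = 24 * integral triH_param G"
proof -
  have piece: "G integrable_on (cube \<inter> {x. x + p \<in> cell \<sigma>})" if "\<sigma> \<in> G4" for \<sigma> p
    using that by (intro integrable_on_compact[OF _ cont] compact_Int_closed compact_cube
        closed_shift_preimage compact_imp_closed compact_cell) simp
  have "integral cube G = (\<Sum>i\<in>G4 \<times> unit_shifts. integral (cube \<inter> {x. x + snd i \<in> cell (fst i)}) G)"
  proof (rule integral_eq_sum_over_partition[OF _ negligible_walls])
    show "finite (G4 \<times> unit_shifts)" by (simp add: finite_G4 finite_unit_shifts)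
  next
    fix x assume "x \<in> cube - walls"
    then show "\<exists>!i. i \<in> G4 \<times> unit_shifts \<and> x \<in> {x. x + snd i \<in> cell (fst i)}"
      using ex1_alcove_translate by simp
  next
    show "G integrable_on (cube \<inter> {x. x + snd i \<in> cell (fst i)})" if "i \<in> G4 \<times> unit_shifts" for i
      using piece that by (cases i) auto
  qed
  also have "\<dots> = (\<Sum>\<sigma>\<in>G4. \<Sum>p\<in>unit_shifts. integral (cube \<inter> {x. x + p \<in> cell \<sigma>}) G)"
    by (subst sum.cartesian_product) (simp add: case_prod_beta)
  also have "\<dots> = (\<Sum>\<sigma>\<in>G4. integral (cell \<sigma>) G)"
    by (intro sum.cong refl integral_fold_into_cube[symmetric] cont per compact_cell)
       (auto dest: cell_bounds)
  also have "\<dots> = (\<Sum>\<sigma>\<in>G4. integral triH_param G)"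
    by (intro sum.cong refl integral_cell cont invariant) auto
  also have "\<dots> = 24 * integral triH_param G"
    by (simp add: card_G4)
  finally show ?thesis .
qed

lemma measure_triH_param: "measure lebesgue triH_param = 1/24"
proof -
  have "(0::real^3) \<in> cbox 0 1" by (simp add: mem_box_cart)
  then have ne: "cbox (0::real^3) 1 \<noteq> {}" by blast
  have "(1::complex) = integral (cube :: (real^3) set) (\<lambda>x. 1)"
    by (simp add: cube_def content_cbox_cart[OF ne])
  also have "\<dots> = 24 * integral triH_param (\<lambda>x. 1)"
    by (rule integral_cube_eq_24_alcove) (auto simp: int_periodic_def)
  also have "integral triH_param (\<lambda>x. 1::complex) = of_real (measure lebesgue triH_param)"
  proof -
    have "(\<lambda>x. 1::real) integrable_on triH_param"
      by (rule integrable_on_const[OF lmeasurable_compact[OF compact_triH_param]])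
    then have "integral triH_param ((\<lambda>r. of_real r :: complex) \<circ> (\<lambda>x. 1::real))
        = of_real (integral triH_param (\<lambda>x. 1::real))"
      by (rule integral_linear[OF _ bounded_linear_of_real])
    then have "integral triH_param (\<lambda>x. 1::complex) = of_real (integral triH_param (\<lambda>x. 1::real))"
      by (simp add: o_def)
    then show ?thesis
      using lmeasure_integral[OF lmeasurable_compact[OF compact_triH_param]] by simp
  qed
  finally have "complex_of_real (24 * measure lebesgue triH_param) = complex_of_real 1"
    by simp
  then have "24 * measure lebesgue triH_param = 1"
    by (simp only: of_real_eq_iff)
  then show ?thesis by simp
qed

lemma ipH_eq_integral_cube:
  fixes F1 F2 :: "real^4 \<Rightarrow> complex"
  assumes "continuous_on UNIV (\<lambda>x. F1 (embH x) * cnj (F2 (embH x)))"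
    and "int_periodic (\<lambda>x. F1 (embH x) * cnj (F2 (embH x)))"
    and "\<And>\<sigma> x. \<sigma> permutes UNIV \<Longrightarrow>
      F1 (embH (permH \<sigma> x)) * cnj (F2 (embH (permH \<sigma> x))) = F1 (embH x) * cnj (F2 (embH x))"
  shows "ipH F1 F2 = integral cube (\<lambda>x. F1 (embH x) * cnj (F2 (embH x)))"
  by (simp add: ipH_def measure_triH_param integral_cube_eq_24_alcove[OF assms] field_simps)

section \<open>Characters on the cube\<close>

lemma phi_add: "phi c (t + s) = phi c t * phi c s"
proof -
  have "(\<Sum>i\<in>UNIV. real_of_int (c $ i) * (t + s) $ i) =
        (\<Sum>i\<in>UNIV. real_of_int (c $ i) * t $ i) + (\<Sum>i\<in>UNIV. real_of_int (c $ i) * s $ i)"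
    by (simp add: distrib_left sum.distrib)
  then show ?thesis by (simp add: phi_def distrib_left exp_add[symmetric])
qed

lemma phi_zero [simp]: "phi 0 t = 1"
  by (simp add: phi_def)

lemma phi_mult_cnj: "phi a t * cnj (phi b t) = phi (a - b) t"
proof -
  define X where "X = complex_of_real (pi / 2) * \<i>"
  define A where "A = (\<Sum>i\<in>UNIV. real_of_int (a $ i) * t $ i)"
  define B where "B = (\<Sum>i\<in>UNIV. real_of_int (b $ i) * t $ i)"
  have AB: "(\<Sum>i\<in>UNIV. real_of_int ((a - b) $ i) * t $ i) = A - B"
    by (simp add: A_def B_def sum_subtractf[symmetric] algebra_simps)
  have "phi a t * cnj (phi b t) = exp (X * of_real A) * exp (cnj (X * of_real B))"
    by (simp add: phi_def X_def A_def B_def exp_cnj)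
  also have "\<dots> = exp (X * of_real A) * exp (- (X * of_real B))"
    by (simp add: X_def)
  also have "\<dots> = exp (X * of_real A + - (X * of_real B))"
    by (rule mult_exp_exp)
  also have "X * of_real A + - (X * of_real B) = X * of_real (A - B)"
    by (simp add: algebra_simps)
  also have "exp (X * of_real (A - B)) = phi (a - b) t"
    unfolding phi_def X_def AB ..
  finally show ?thesis .
qed

lemma phi_pvec:
  assumes "\<sigma> permutes UNIV"
  shows "phi k (pvec t \<sigma>) = phi (pvec k (inv \<sigma>)) t"
proof -
  have "(\<Sum>i\<in>UNIV. real_of_int (k $ inv \<sigma> i) * t $ i) = (\<Sum>i\<in>UNIV. real_of_int (k $ i) * t $ \<sigma> i)"
    using sum.permute[OF assms, of "\<lambda>i. real_of_int (k $ inv \<sigma> i) * t $ i"]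
    by (simp add: o_def permutes_inverses(2)[OF assms])
  then show ?thesis by (simp add: phi_def)
qed

lemma HH_sum: "c \<in> HH \<Longrightarrow> (\<Sum>i\<in>UNIV. c $ i) = 0"
  by (simp add: HH_def Z4H_def)

lemma HH_diff:
  assumes k: "k \<in> HH" and j: "j \<in> HH"
  shows "k - j \<in> HH"
proof -
  have "(\<Sum>i\<in>UNIV. (k - j) $ i) = 0"
    using HH_sum[OF k] HH_sum[OF j] by (simp add: sum_subtractf)
  moreover have "(k - j) $ a mod 4 = (k - j) $ b mod 4" for a b
  proof -
    have "k $ a mod 4 = k $ b mod 4" "j $ a mod 4 = j $ b mod 4"
      using k j unfolding HH_def by blast+
    then have "(k $ a - j $ a) mod 4 = (k $ b - j $ b) mod 4" by (rule mod_diff_cong)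
    then show ?thesis by simp
  qed
  ultimately show ?thesis unfolding HH_def Z4H_def by blast
qed

lemma HH_pvec:
  assumes k: "k \<in> HH" and \<sigma>: "\<sigma> permutes UNIV"
  shows "pvec k \<sigma> \<in> HH"
proof -
  have "(\<Sum>i\<in>UNIV. pvec k \<sigma> $ i) = 0"
    using HH_sum[OF k] sum_permute_nth[OF \<sigma>, of k] by simp
  moreover have "pvec k \<sigma> $ a mod 4 = pvec k \<sigma> $ b mod 4" for a b
  proof -
    have "k $ \<sigma> a mod 4 = k $ \<sigma> b mod 4" using k unfolding HH_def by blast
    then show ?thesis by (simp only: pvec_nth)
  qed
  ultimately show ?thesis unfolding HH_def Z4H_def by blast
qed

lemma HH_nth_eq: assumes "c \<in> HH" shows "\<exists>n. c $ m = c $ 4 + 4 * n"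
proof -
  have "c $ m mod 4 = c $ 4 mod 4" using assms unfolding HH_def by blast
  then have "4 dvd (c $ m - c $ 4)" by (simp add: mod_eq_dvd_iff)
  then obtain n where "c $ m - c $ 4 = 4 * n" by (auto elim: dvdE)
  then show ?thesis by (intro exI[of _ n]) simp
qed

text \<open>Writing \<open>c\<^sub>m = c\<^sub>4 + 4 n\<^sub>m\<close>, the exponent becomes \<open>2\<pi>i \<Sum> n\<^sub>m l\<^sub>m\<close> because \<open>\<Sum> l\<^sub>m = 0\<close>.\<close>

lemma phi_eq_1:
  assumes c: "c \<in> HH" and l: "\<And>m. l $ m \<in> \<int>" and l_sum: "(\<Sum>m\<in>UNIV. l $ m) = 0"
  shows "phi c l = 1"
proof -
  obtain n where n: "\<And>m. c $ m = c $ 4 + 4 * n m" using HH_nth_eq[OF c] by metis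
  have "(\<Sum>m\<in>UNIV. real_of_int (c $ m) * l $ m) =
        (\<Sum>m\<in>UNIV. real_of_int (c $ 4) * l $ m + 4 * (real_of_int (n m) * l $ m))"
    by (rule sum.cong[OF refl]) (subst n, simp add: algebra_simps)
  also have "\<dots> = real_of_int (c $ 4) * (\<Sum>m\<in>UNIV. l $ m) + 4 * (\<Sum>m\<in>UNIV. real_of_int (n m) * l $ m)"
    by (simp add: sum.distrib sum_distrib_left)
  also have "\<dots> = 2 * (2 * (\<Sum>m\<in>UNIV. real_of_int (n m) * l $ m))"
    using l_sum by simp
  finally have exponent: "(\<Sum>m\<in>UNIV. real_of_int (c $ m) * l $ m) = 2 * (2 * (\<Sum>m\<in>UNIV. real_of_int (n m) * l $ m))" .
  have "(\<Sum>m\<in>UNIV. real_of_int (n m) * l $ m) \<in> \<int>"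
    by (intro Ints_sum Ints_mult) (auto simp: l)
  then obtain N where N: "(\<Sum>m\<in>UNIV. real_of_int (n m) * l $ m) = of_int N"
    by (elim Ints_cases)
  have "phi c l = exp ((2 * of_int N * pi) * \<i>)"
    unfolding phi_def exponent N by (simp add: field_simps)
  also have "\<dots> = 1" by (rule exp_integer_2pi) simp
  finally show ?thesis .
qed

lemma int_periodic_phi_embH: "c \<in> HH \<Longrightarrow> int_periodic (\<lambda>x. phi c (embH x))"
  by (simp add: int_periodic_def embH_add phi_add phi_eq_1 embH_Ints sum_embH)

lemma continuous_on_phi_embH: "continuous_on UNIV (\<lambda>x. phi c (embH x))"
  unfolding phi_def by (intro continuous_intros continuous_on_embH_nth)

lemma integral_cube_phi_eq_0:
  assumes c: "c \<in> HH" and v: "v \<in> cube" and flip: "phi c (embH v) = -1"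
  shows "integral cube (\<lambda>x. phi c (embH x)) = 0"
proof -
  have "integral cube (\<lambda>x. phi c (embH (x + v))) = integral cube (\<lambda>x. phi c (embH x))"
    by (rule integral_cube_translate[OF continuous_on_phi_embH int_periodic_phi_embH[OF c] v])
  moreover have "(\<lambda>x. phi c (embH (x + v))) = (\<lambda>x. - phi c (embH x))"
    by (simp add: embH_add phi_add flip)
  ultimately have "- integral cube (\<lambda>x. phi c (embH x)) = integral cube (\<lambda>x. phi c (embH x))"
    by (simp add: integral_neg)
  then show ?thesis by simp
qed

text \<open>If \<open>c\<^sub>m \<noteq> c\<^sub>4\<close> then \<open>d = c\<^sub>m - c\<^sub>4\<close> is a nonzero multiple of \<open>4\<close>, and moving \<open>t\<^sub>m\<close> by
  \<open>2/|d|\<close> (against \<open>t\<^sub>4\<close>) multiplies \<open>phi c\<close> by \<open>exp (\<plusminus>i\<pi>) = -1\<close>.\<close>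

lemma ex_cube_phi_minus_1:
  assumes c: "c \<in> HH" and ne: "c $ m \<noteq> c $ 4"
    and axis_sum: "\<And>s. (\<Sum>k\<in>UNIV. real_of_int (c $ k) * embH (axis i s) $ k) = real_of_int (c $ m - c $ 4) * s"
  shows "\<exists>v\<in>cube. phi c (embH v) = -1"
proof -
  define d where "d = c $ m - c $ 4"
  obtain n where "c $ m = c $ 4 + 4 * n" using HH_nth_eq[OF c] by blast
  with ne have "4 \<le> \<bar>d\<bar>" by (simp add: d_def abs_mult)
  then have d: "4 \<le> \<bar>real_of_int d\<bar>" by linarith
  define s where "s = 2 / \<bar>real_of_int d\<bar>"
  have "0 \<le> s \<and> s \<le> 1" using d by (simp add: s_def field_simps)
  then have v: "axis i s \<in> cube" by (simp add: mem_cube axis_def)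
  have "real_of_int d * s = 2 \<or> real_of_int d * s = -2"
    using d by (cases "d > 0") (auto simp: s_def)
  then have "complex_of_real (pi / 2) * \<i> * complex_of_real (real_of_int d * s) = pi * \<i> \<or>
      complex_of_real (pi / 2) * \<i> * complex_of_real (real_of_int d * s) = - (pi * \<i>)"
    by (elim disjE) simp_all
  then have "phi c (embH (axis i s)) = -1"
    unfolding phi_def axis_sum d_def[symmetric] by (elim disjE) (simp_all add: exp_minus)
  then show ?thesis using v by blast
qed

lemma integral_cube_phi:
  assumes c: "c \<in> HH"
  shows "integral cube (\<lambda>x. phi c (embH x)) = (if c = 0 then 1 else 0)"
proof (cases "c = 0")
  case True
  have "(0::real^3) \<in> cbox 0 1" by (simp add: mem_box_cart)
  then have "cbox (0::real^3) 1 \<noteq> {}" by blast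
  then show ?thesis using True by (simp add: cube_def content_cbox_cart)
next
  case False
  have "c $ 1 \<noteq> c $ 4 \<or> c $ 2 \<noteq> c $ 4 \<or> c $ 3 \<noteq> c $ 4"
  proof (rule ccontr)
    assume "\<not> ?thesis"
    moreover have "c $ 1 + c $ 2 + c $ 3 + c $ 4 = 0" using HH_sum[OF c] by (simp add: sum_4)
    ultimately have "c = 0" by (simp add: vec_eq_iff forall_4)
    with False show False by simp
  qed
  then have "\<exists>v\<in>cube. phi c (embH v) = -1"
  proof (elim disjE)
    assume "c $ 1 \<noteq> c $ 4"
    then show ?thesis by (rule ex_cube_phi_minus_1[OF c _, where i = 1]) (simp add: sum_4 axis_def algebra_simps)
  next
    assume "c $ 2 \<noteq> c $ 4"
    then show ?thesis by (rule ex_cube_phi_minus_1[OF c _, where i = 2]) (simp add: sum_4 axis_def algebra_simps)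
  next
    assume "c $ 3 \<noteq> c $ 4"
    then show ?thesis by (rule ex_cube_phi_minus_1[OF c _, where i = 3]) (simp add: sum_4 axis_def algebra_simps)
  qed
  then show ?thesis using integral_cube_phi_eq_0[OF c] False by auto
qed

section \<open>The symmetric and antisymmetric orbit sums\<close>

definition char_sum :: "((4 \<Rightarrow> 4) \<Rightarrow> complex) \<Rightarrow> int^4 \<Rightarrow> real^4 \<Rightarrow> complex" where
  "char_sum a k t = (\<Sum>\<sigma>\<in>G4. a \<sigma> * phi (pvec k \<sigma>) t)"

lemma sum_G4_inv: "(\<Sum>\<sigma>\<in>G4. h (inv \<sigma>)) = (\<Sum>\<sigma>\<in>G4. h \<sigma>)"
  by (rule sum.reindex_bij_witness[where i = inv and j = inv])
     (auto simp: permutes_inv permutes_inv_inv)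

lemma sum_G4_compose_left:
  assumes "\<sigma> permutes UNIV"
  shows "(\<Sum>\<tau>\<in>G4. h (\<sigma> \<circ> \<tau>)) = (\<Sum>\<tau>\<in>G4. h \<tau>)"
proof (rule sum.reindex_bij_witness[where i = "\<lambda>\<tau>. inv \<sigma> \<circ> \<tau>" and j = "\<lambda>\<tau>. \<sigma> \<circ> \<tau>"])
  show "inv \<sigma> \<circ> (\<sigma> \<circ> \<tau>) = \<tau>" "\<sigma> \<circ> (inv \<sigma> \<circ> \<tau>) = \<tau>" for \<tau>
    by (simp_all add: o_assoc permutes_inv_o[OF assms])
  show "\<sigma> \<circ> \<tau> \<in> G4" "inv \<sigma> \<circ> \<tau> \<in> G4" if "\<tau> \<in> G4" for \<tau>
    using that assms by (simp_all add: permutes_compose permutes_inv)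
qed simp

lemma TC_eq_char_sum: "TC k t = char_sum (\<lambda>_. 1/24) k t"
proof -
  have "(\<Sum>\<sigma>\<in>G4. phi k (pvec t \<sigma>)) = (\<Sum>\<sigma>\<in>G4. phi (pvec k (inv \<sigma>)) t)"
    by (rule sum.cong[OF refl]) (simp add: phi_pvec)
  also have "\<dots> = (\<Sum>\<sigma>\<in>G4. phi (pvec k \<sigma>) t)"
    by (rule sum_G4_inv)
  finally show ?thesis by (simp add: TC_def char_sum_def sum_distrib_left)
qed

lemma TS_eq_char_sum: "TS k t = char_sum (\<lambda>\<sigma>. - of_int (sign \<sigma>) / 24) k t"
proof -
  have "(\<Sum>\<sigma>\<in>G4. of_int (sign \<sigma>) * phi k (pvec t \<sigma>))
      = (\<Sum>\<sigma>\<in>G4. of_int (sign (inv \<sigma>)) * phi (pvec k (inv \<sigma>)) t)"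
    by (rule sum.cong[OF refl])
       (simp add: phi_pvec sign_inverse permutes_imp_permutation[OF finite_class.finite_UNIV])
  also have "\<dots> = (\<Sum>\<sigma>\<in>G4. of_int (sign \<sigma>) * phi (pvec k \<sigma>) t)"
    by (rule sum_G4_inv[where h = "\<lambda>\<sigma>. of_int (sign \<sigma>) * phi (pvec k \<sigma>) t"])
  finally show ?thesis by (simp add: TS_def char_sum_def sum_distrib_left)
qed

lemma char_sum_mult_cnj:
  "char_sum a k t * cnj (char_sum b j t)
     = (\<Sum>\<sigma>\<in>G4. \<Sum>\<tau>\<in>G4. a \<sigma> * cnj (b \<tau>) * phi (pvec k \<sigma> - pvec j \<tau>) t)"
proof -
  have "char_sum a k t * cnj (char_sum b j t)
      = (\<Sum>\<sigma>\<in>G4. \<Sum>\<tau>\<in>G4. (a \<sigma> * phi (pvec k \<sigma>) t) * (cnj (b \<tau>) * cnj (phi (pvec j \<tau>) t)))"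
    by (simp add: char_sum_def cnj_sum sum_product)
  also have "\<dots> = (\<Sum>\<sigma>\<in>G4. \<Sum>\<tau>\<in>G4. a \<sigma> * cnj (b \<tau>) * phi (pvec k \<sigma> - pvec j \<tau>) t)"
    by (intro sum.cong refl) (simp add: phi_mult_cnj[symmetric] mult_ac)
  finally show ?thesis .
qed

lemma continuous_on_char_sum_mult_cnj:
  "continuous_on UNIV (\<lambda>x. char_sum a k (embH x) * cnj (char_sum b j (embH x)))"
  unfolding char_sum_mult_cnj by (intro continuous_intros continuous_on_phi_embH)

lemma HH_pvec_diff:
  "k \<in> HH \<Longrightarrow> j \<in> HH \<Longrightarrow> \<sigma> \<in> G4 \<Longrightarrow> \<tau> \<in> G4 \<Longrightarrow> pvec k \<sigma> - pvec j \<tau> \<in> HH"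
  by (simp add: HH_diff HH_pvec)

lemma int_periodic_char_sum_mult_cnj:
  assumes "k \<in> HH" "j \<in> HH"
  shows "int_periodic (\<lambda>x. char_sum a k (embH x) * cnj (char_sum b j (embH x)))"
  using int_periodic_phi_embH[OF HH_pvec_diff[OF assms]]
  unfolding char_sum_mult_cnj int_periodic_def by simp

lemma integral_cube_char_sum:
  assumes k: "k \<in> HH" and j: "j \<in> HH"
  shows "integral cube (\<lambda>x. char_sum a k (embH x) * cnj (char_sum b j (embH x)))
       = (\<Sum>\<sigma>\<in>G4. \<Sum>\<tau>\<in>G4. if pvec k \<sigma> = pvec j \<tau> then a \<sigma> * cnj (b \<tau>) else 0)"
proof -
  have integrable: "(\<lambda>x. a \<sigma> * cnj (b \<tau>) * phi (pvec k \<sigma> - pvec j \<tau>) (embH x)) integrable_on cube" for \<sigma> \<tau>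
    by (intro integrable_on_mult_right integrable_on_compact[OF compact_cube continuous_on_phi_embH])
  have "integral cube (\<lambda>x. char_sum a k (embH x) * cnj (char_sum b j (embH x)))
      = (\<Sum>\<sigma>\<in>G4. \<Sum>\<tau>\<in>G4. integral cube (\<lambda>x. a \<sigma> * cnj (b \<tau>) * phi (pvec k \<sigma> - pvec j \<tau>) (embH x)))"
    unfolding char_sum_mult_cnj
    by (simp add: integral_sum finite_G4 integrable Henstock_Kurzweil_Integration.integrable_sum)
  also have "\<dots> = (\<Sum>\<sigma>\<in>G4. \<Sum>\<tau>\<in>G4. if pvec k \<sigma> = pvec j \<tau> then a \<sigma> * cnj (b \<tau>) else 0)"
    by (intro sum.cong refl) (simp add: integral_cube_phi HH_pvec_diff[OF k j])
  finally show ?thesis .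
qed

lemma TC_pvec: "\<sigma> permutes UNIV \<Longrightarrow> TC k (pvec t \<sigma>) = TC k t"
  unfolding TC_def pvec_pvec by (simp add: sum_G4_compose_left[where h = "\<lambda>\<tau>. phi k (pvec t \<tau>)"])

lemma TS_pvec:
  assumes \<sigma>: "\<sigma> permutes UNIV"
  shows "TS k (pvec t \<sigma>) = of_int (sign \<sigma>) * TS k t"
proof -
  have "(\<Sum>\<tau>\<in>G4. of_int (sign \<tau>) * phi k (pvec t (\<sigma> \<circ> \<tau>)))
      = (\<Sum>\<tau>\<in>G4. of_int (sign \<sigma>) * (of_int (sign (\<sigma> \<circ> \<tau>)) * phi k (pvec t (\<sigma> \<circ> \<tau>))) :: complex)"
  proof (rule sum.cong[OF refl])
    fix \<tau> assume "\<tau> \<in> G4"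
    then have "sign (\<sigma> \<circ> \<tau>) = sign \<sigma> * sign \<tau>"
      using sign_compose[OF permutes_imp_permutation[OF finite_class.finite_UNIV \<sigma>]
          permutes_imp_permutation[OF finite_class.finite_UNIV, of \<tau>]] by simp
    then have "of_int (sign \<sigma>) * of_int (sign (\<sigma> \<circ> \<tau>)) = (of_int (sign \<tau>) :: complex)"
      by (metis mult.assoc[symmetric] sign_idempotent mult_1 of_int_mult)
    then show "of_int (sign \<tau>) * phi k (pvec t (\<sigma> \<circ> \<tau>))
      = of_int (sign \<sigma>) * (of_int (sign (\<sigma> \<circ> \<tau>)) * phi k (pvec t (\<sigma> \<circ> \<tau>)))"
      by (simp add: mult.assoc[symmetric])
  qed
  also have "\<dots> = of_int (sign \<sigma>) * (\<Sum>\<tau>\<in>G4. of_int (sign \<tau>) * phi k (pvec t \<tau>))"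
    by (simp add: sum_distrib_left[symmetric]
        sum_G4_compose_left[OF \<sigma>, where h = "\<lambda>\<tau>. of_int (sign \<tau>) * phi k (pvec t \<tau>)"])
  finally show ?thesis by (simp add: TS_def pvec_pvec)
qed

lemma ipH_TC:
  assumes "k \<in> HH" "j \<in> HH"
  shows "ipH (TC k) (TC j) = (\<Sum>\<sigma>\<in>G4. \<Sum>\<tau>\<in>G4. if pvec k \<sigma> = pvec j \<tau> then 1/576 else 0)"
proof -
  have "ipH (TC k) (TC j) = integral cube (\<lambda>x. TC k (embH x) * cnj (TC j (embH x)))"
  proof (rule ipH_eq_integral_cube)
    show "continuous_on UNIV (\<lambda>x. TC k (embH x) * cnj (TC j (embH x)))"
      "int_periodic (\<lambda>x. TC k (embH x) * cnj (TC j (embH x)))"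
      by (simp_all add: TC_eq_char_sum continuous_on_char_sum_mult_cnj int_periodic_char_sum_mult_cnj assms)
    show "TC k (embH (permH \<sigma> x)) * cnj (TC j (embH (permH \<sigma> x))) = TC k (embH x) * cnj (TC j (embH x))"
      if "\<sigma> permutes UNIV" for \<sigma> x
      by (simp only: embH_permH[OF that] TC_pvec[OF that])
  qed
  also have "\<dots> = (\<Sum>\<sigma>\<in>G4. \<Sum>\<tau>\<in>G4. if pvec k \<sigma> = pvec j \<tau> then 1/24 * cnj (1/24) else 0)"
    by (simp only: TC_eq_char_sum integral_cube_char_sum assms)
  also have "\<dots> = (\<Sum>\<sigma>\<in>G4. \<Sum>\<tau>\<in>G4. if pvec k \<sigma> = pvec j \<tau> then 1/576 else 0)"
    by (intro sum.cong refl) simp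
  finally show ?thesis .
qed

lemma ipH_TS:
  assumes "k \<in> HH" "j \<in> HH"
  shows "ipH (TS k) (TS j)
       = (\<Sum>\<sigma>\<in>G4. \<Sum>\<tau>\<in>G4. if pvec k \<sigma> = pvec j \<tau> then of_int (sign \<sigma> * sign \<tau>) / 576 else 0)"
proof -
  have sign_sq: "of_int (sign \<sigma>) * of_int (sign \<sigma>) = (1::complex)" for \<sigma> :: "4 \<Rightarrow> 4"
    by (metis of_int_mult sign_idempotent of_int_1)
  have "ipH (TS k) (TS j) = integral cube (\<lambda>x. TS k (embH x) * cnj (TS j (embH x)))"
  proof (rule ipH_eq_integral_cube)
    show "continuous_on UNIV (\<lambda>x. TS k (embH x) * cnj (TS j (embH x)))"
      "int_periodic (\<lambda>x. TS k (embH x) * cnj (TS j (embH x)))"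
      by (simp_all add: TS_eq_char_sum continuous_on_char_sum_mult_cnj int_periodic_char_sum_mult_cnj assms)
    show "TS k (embH (permH \<sigma> x)) * cnj (TS j (embH (permH \<sigma> x))) = TS k (embH x) * cnj (TS j (embH x))"
      if "\<sigma> permutes UNIV" for \<sigma> x
      using sign_sq[of \<sigma>] by (simp add: embH_permH that TS_pvec mult_ac)
  qed
  also have "\<dots> = (\<Sum>\<sigma>\<in>G4. \<Sum>\<tau>\<in>G4. if pvec k \<sigma> = pvec j \<tau>
      then - of_int (sign \<sigma>) / 24 * cnj (- of_int (sign \<tau>) / 24) else 0)"
    by (simp only: TS_eq_char_sum integral_cube_char_sum assms)
  also have "\<dots> = (\<Sum>\<sigma>\<in>G4. \<Sum>\<tau>\<in>G4. if pvec k \<sigma> = pvec j \<tau> then of_int (sign \<sigma> * sign \<tau>) / 576 else 0)"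
    by (intro sum.cong refl) (simp add: of_int_mult)
  finally show ?thesis .
qed

section \<open>Counting coincidences \<open>k\<sigma> = j\<tau>\<close>\<close>

lemma Lam_HH: "k \<in> Lam \<Longrightarrow> k \<in> HH"
  by (simp add: Lam_def)

lemma Lam_int_Lam: "k \<in> Lam_int \<Longrightarrow> k \<in> Lam"
  by (auto simp: Lam_int_def Lam_def)

text \<open>Sorted vectors in the same orbit coincide: the maxima and the minima agree, and the two middle
  entries are then determined by their sum and their sum of squares.\<close>

lemma Lam_eq_if_pvec:
  assumes k: "k \<in> Lam" and j: "j \<in> Lam" and \<rho>: "\<rho> permutes UNIV" and kj: "k = pvec j \<rho>"
  shows "k = j"
proof -
  have kd: "k$2 \<le> k$1" "k$3 \<le> k$2" "k$4 \<le> k$3" using k by (auto simp: Lam_def)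
  have jd: "j$2 \<le> j$1" "j$3 \<le> j$2" "j$4 \<le> j$3" using j by (auto simp: Lam_def)
  have k_bounds: "k$m \<le> k$1" "k$4 \<le> k$m" for m using kd exhaust_4[of m] by auto
  have j_bounds: "j$m \<le> j$1" "j$4 \<le> j$m" for m using jd exhaust_4[of m] by auto
  have km: "k$m = j$(\<rho> m)" for m using kj by simp
  have jm: "j$m = k$(inv \<rho> m)" for m
    using kj pvec_inv[OF \<rho>, of j] by (metis pvec_nth)
  have 1: "k$1 = j$1"
    using km[of 1] jm[of 1] k_bounds(1)[of "inv \<rho> 1"] j_bounds(1)[of "\<rho> 1"] by linarith
  have 4: "k$4 = j$4"
    using km[of 4] jm[of 4] k_bounds(2)[of "inv \<rho> 4"] j_bounds(2)[of "\<rho> 4"] by linarith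
  have "(\<Sum>m\<in>UNIV. (k$m)^2) = (\<Sum>m\<in>UNIV. (j$(\<rho> m))^2)" by (simp add: km)
  also have "\<dots> = (\<Sum>m\<in>UNIV. (j$m)^2)"
    using sum.permute[OF \<rho>, of "\<lambda>m. (j$m)^2"] by (simp add: o_def)
  finally have squares: "(k$1)^2 + (k$2)^2 + (k$3)^2 + (k$4)^2 = (j$1)^2 + (j$2)^2 + (j$3)^2 + (j$4)^2"
    by (simp add: sum_4)
  have "k$1 + k$2 + k$3 + k$4 = 0" "j$1 + j$2 + j$3 + j$4 = 0"
    using HH_sum[OF Lam_HH[OF k]] HH_sum[OF Lam_HH[OF j]] by (simp_all add: sum_4)
  then have sum23: "k$2 + k$3 = j$2 + j$3" using 1 4 by linarith
  have sq23: "(k$2)^2 + (k$3)^2 = (j$2)^2 + (j$3)^2" using squares 1 4 by simp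
  have "(k$2 - k$3)^2 = 2 * ((k$2)^2 + (k$3)^2) - (k$2 + k$3)^2"
    by (simp add: power2_eq_square algebra_simps)
  also have "\<dots> = 2 * ((j$2)^2 + (j$3)^2) - (j$2 + j$3)^2"
    by (simp only: sum23 sq23)
  also have "\<dots> = (j$2 - j$3)^2"
    by (simp add: power2_eq_square algebra_simps)
  finally have "k$2 - k$3 = j$2 - j$3"
    by (rule power2_eq_imp_eq) (use kd jd in auto)
  then have "k$2 = j$2" "k$3 = j$3" using sum23 by linarith+
  then show ?thesis using 1 4 by (simp add: vec_eq_iff forall_4)
qed

lemma Lam_eq_if_pvec_eq:
  assumes "k \<in> Lam" "j \<in> Lam" "\<sigma> permutes UNIV" "\<tau> permutes UNIV" "pvec k \<sigma> = pvec j \<tau>"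
  shows "k = j"
proof (rule Lam_eq_if_pvec[OF assms(1,2)])
  show "\<tau> \<circ> inv \<sigma> permutes UNIV"
    using assms(3,4) by (simp add: permutes_compose permutes_inv)
  show "k = pvec j (\<tau> \<circ> inv \<sigma>)"
    using pvec_inv[OF assms(3), of k] assms(5) by (simp add: pvec_pvec[symmetric])
qed

definition stab :: "int^4 \<Rightarrow> (4 \<Rightarrow> 4) set" where
  "stab k = {\<rho>\<in>G4. pvec k \<rho> = k}"

lemma card_pvec_fiber:
  assumes \<sigma>: "\<sigma> permutes UNIV"
  shows "card {\<tau>\<in>G4. pvec k \<tau> = pvec k \<sigma>} = card (stab k)"
proof (rule bij_betw_same_card[of "\<lambda>\<tau>. \<tau> \<circ> inv \<sigma>"], rule bij_betw_byWitness[where f' = "\<lambda>\<rho>. \<rho> \<circ> \<sigma>"])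
  show "\<forall>\<tau>\<in>{\<tau> \<in> G4. pvec k \<tau> = pvec k \<sigma>}. \<tau> \<circ> inv \<sigma> \<circ> \<sigma> = \<tau>"
    by (simp add: o_assoc[symmetric] permutes_inv_o(2)[OF \<sigma>])
  show "\<forall>\<rho>\<in>stab k. \<rho> \<circ> \<sigma> \<circ> inv \<sigma> = \<rho>"
    by (simp add: o_assoc[symmetric] permutes_inv_o(1)[OF \<sigma>])
  show "(\<lambda>\<tau>. \<tau> \<circ> inv \<sigma>) ` {\<tau> \<in> G4. pvec k \<tau> = pvec k \<sigma>} \<subseteq> stab k"
    using \<sigma> by (auto simp: stab_def pvec_pvec[symmetric] pvec_inv permutes_compose permutes_inv)
  show "(\<lambda>\<rho>. \<rho> \<circ> \<sigma>) ` stab k \<subseteq> {\<tau> \<in> G4. pvec k \<tau> = pvec k \<sigma>}"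
    using \<sigma> by (auto simp: stab_def pvec_pvec[symmetric] permutes_compose)
qed

lemma orbit_card_mult_card_stab: "orbit_card k * card (stab k) = 24"
proof -
  have "card G4 = (\<Sum>y\<in>pvec k ` G4. card {\<tau>\<in>G4. pvec k \<tau> = y})"
    using card_eq_sum sum.image_gen[OF finite_G4, of "\<lambda>_. 1::nat" "pvec k"] by simp
  also have "\<dots> = (\<Sum>y\<in>pvec k ` G4. card (stab k))"
  proof (rule sum.cong[OF refl])
    fix y assume "y \<in> pvec k ` G4"
    then obtain \<sigma> where "\<sigma> permutes UNIV" "y = pvec k \<sigma>" by auto
    then show "card {\<tau>\<in>G4. pvec k \<tau> = y} = card (stab k)"
      using card_pvec_fiber[of \<sigma> k] by simp
  qed
  also have "\<dots> = orbit_card k * card (stab k)"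
    by (simp add: orbit_card_def)
  finally show ?thesis using card_G4 by simp
qed

lemma count_pvec_coincidences:
  "(\<Sum>\<sigma>\<in>G4. \<Sum>\<tau>\<in>G4. if pvec k \<sigma> = pvec k \<tau> then c else 0) = 24 * of_nat (card (stab k)) * (c::complex)"
proof -
  have "(\<Sum>\<tau>\<in>G4. if pvec k \<sigma> = pvec k \<tau> then c else 0) = of_nat (card (stab k)) * c"
    if "\<sigma> \<in> G4" for \<sigma>
  proof -
    have "(\<Sum>\<tau>\<in>G4. if pvec k \<sigma> = pvec k \<tau> then c else 0) = (\<Sum>\<tau>\<in>{\<tau>\<in>G4. pvec k \<tau> = pvec k \<sigma>}. c)"
      by (simp add: sum.inter_filter[OF finite_G4, symmetric] eq_commute)
    then show ?thesis using card_pvec_fiber[of \<sigma> k] that by simp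
  qed
  then show ?thesis by (simp add: card_G4)
qed

lemma pvec_eq_iff_Lam_int:
  assumes "k \<in> Lam_int"
  shows "pvec k \<sigma> = pvec k \<tau> \<longleftrightarrow> \<sigma> = \<tau>"
proof -
  have "k$1 > k$2" "k$2 > k$3" "k$3 > k$4" using assms by (auto simp: Lam_int_def)
  then have "k $ a = k $ b \<Longrightarrow> a = b" for a b
    using exhaust_4[of a] exhaust_4[of b] by auto
  then show ?thesis by (auto simp: vec_eq_iff fun_eq_iff)
qed

lemma sum_coincidences_eq_0:
  assumes "k \<in> Lam" "j \<in> Lam" "k \<noteq> j"
  shows "(\<Sum>\<sigma>\<in>G4. \<Sum>\<tau>\<in>G4. if pvec k \<sigma> = pvec j \<tau> then c \<sigma> \<tau> else 0) = 0"
proof -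
  have "(if pvec k \<sigma> = pvec j \<tau> then c \<sigma> \<tau> else 0) = 0" if "\<sigma> \<in> G4" "\<tau> \<in> G4" for \<sigma> \<tau>
    using Lam_eq_if_pvec_eq[OF assms(1,2)] assms(3) that by auto
  then show ?thesis by (simp add: sum.neutral)
qed

lemma sum_sign_coincidences_Lam_int:
  assumes "k \<in> Lam_int"
  shows "(\<Sum>\<sigma>\<in>G4. \<Sum>\<tau>\<in>G4. if pvec k \<sigma> = pvec k \<tau> then of_int (sign \<sigma> * sign \<tau>) / 576 else 0)
       = (1/24 :: complex)"
proof -
  have "(\<Sum>\<tau>\<in>G4. if pvec k \<sigma> = pvec k \<tau> then of_int (sign \<sigma> * sign \<tau>) / 576 else 0)
      = (1/576 :: complex)" if "\<sigma> \<in> G4" for \<sigma>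
    using that by (simp add: pvec_eq_iff_Lam_int[OF assms] sign_idempotent)
  then have "(\<Sum>\<sigma>\<in>G4. \<Sum>\<tau>\<in>G4. if pvec k \<sigma> = pvec k \<tau> then of_int (sign \<sigma> * sign \<tau>) / 576 else 0)
      = (\<Sum>\<sigma>\<in>G4. 1/576 :: complex)"
    by (rule sum.cong[OF refl])
  then show ?thesis by (simp add: card_G4)
qed

lemma ipH_TC_Lam:
  assumes k: "k \<in> Lam" and j: "j \<in> Lam"
  shows "ipH (TC k) (TC j) = (if k = j then 1 / of_nat (orbit_card k) else 0)"
proof (cases "k = j")
  case True
  have "of_nat (orbit_card k) * of_nat (card (stab k)) = (24::complex)"
    using orbit_card_mult_card_stab[of k] by (metis of_nat_mult of_nat_numeral)
  moreover have "orbit_card k \<noteq> 0"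
    using orbit_card_mult_card_stab[of k] by (metis mult_0 zero_neq_numeral)
  ultimately have "ipH (TC k) (TC k) = 1 / of_nat (orbit_card k)"
    by (simp add: ipH_TC[OF Lam_HH[OF k] Lam_HH[OF k]] count_pvec_coincidences field_simps)
  with True show ?thesis by simp
next
  case False
  then show ?thesis
    by (simp add: ipH_TC[OF Lam_HH[OF k] Lam_HH[OF j]] sum_coincidences_eq_0[OF k j])
qed

lemma ipH_TS_Lam_int:
  assumes k: "k \<in> Lam_int" and j: "j \<in> Lam_int"
  shows "ipH (TS k) (TS j) = (if k = j then 1 / 24 else 0)"
proof (cases "k = j")
  case True
  have "ipH (TS k) (TS k) = 1 / 24"
    by (simp add: ipH_TS[OF Lam_HH[OF Lam_int_Lam[OF k]] Lam_HH[OF Lam_int_Lam[OF k]]]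
        sum_sign_coincidences_Lam_int[OF k])
  with True show ?thesis by simp
next
  case False
  then show ?thesis
    by (simp add: ipH_TS[OF Lam_HH[OF Lam_int_Lam[OF k]] Lam_HH[OF Lam_int_Lam[OF j]]]
        sum_coincidences_eq_0[OF Lam_int_Lam[OF k] Lam_int_Lam[OF j]])
qed

theorem proposition4p3:
  shows "(\<forall>k\<in>Lam. \<forall>j\<in>Lam.
            ipH (TC k) (TC j) = (if k = j then 1 / of_nat (orbit_card k) else 0))
       \<and> (\<forall>k\<in>Lam_int. \<forall>j\<in>Lam_int.
            ipH (TS k) (TS j) = (if k = j then 1 / 24 else 0))"
  by (simp add: ipH_TC_Lam ipH_TS_Lam_int)

end
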